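(* In the module $V(\eta;\kappa,c)$, with $(\kappa,c)$ critical, we have $K\bar u_\epsilon=\kappa_\epsilon \bar u_\epsilon$ and $C_1\bar u_\epsilon=c_\epsilon\bar u_\epsilon$ for $\epsilon=+,-$.
   Context: Let $q\in\mathbb{C}$ be nonzero and not a root of unity, and $U=U_q(\mathfrak{sl}_3)$ the algebra generated by $E_1,E_2,F_1,F_2,K_1^{\pm1},K_2^{\pm1}$ with the Jimbo relations. Put $F_3=F_1F_2-qF_2F_1$, $K=K_1K_2^2$, $C_1=F_1E_1+\frac{qK_1+q^{-1}K_1^{-1}}{(q-q^{-1})^2}$. Let $U^+$ be the subalgebra generated by $E_1,E_2$, $\eta:U^+\to\mathbb{C}$ the algebra homomorphism with $\eta(E_1)=\alpha\neq0$, $\eta(E_2)=0$, and $M(\eta)=U\otimes_{U^+}\mathbb{C}v_\eta$ with $xv_\eta=\eta(x)v_\eta$. Write $[k]=\frac{q^k-q^{-k}}{q-q^{-1}}$, $[k]!=[k]\cdots[1]$, $[0]!=1$, $\genfrac{[}{]}{0pt}{}{n}{k}=\frac{[n]!}{[k]![n-k]!}$ for $0\le k\le n$ (0 otherwise). For $n\in\mathbb{Z}_+$, $l\in\mathbb{Z}$, $Q\in\mathbb{C}[K^{\pm1},C_1]$, $u(n,l,Q)=q^{2nl}K_2^l\sum_{k=0}^{n}\sum_{j=0}^{n-k}a_{kj}(n)F_2^{n-k}F_3^kK_2^{2j}K^{-2j-k}Qv_\eta$ with $a_{kj}(n)=(-1)^j\alpha^k(q^2-1)^kq^{j(n-3)}q^{\frac{1}{2}k(2n+2j+k-7)}\genfrac{[}{]}{0pt}{}{n}{k}\genfrac{[}{]}{0pt}{}{n-k}{j}$.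 For $n\in\mathbb{N}$, $h_n(K,C_1)=q^{3-2n}K+q^{2n-3}K^{-1}-(q-q^{-1})^2C_1$; $(\kappa,c)\in\mathbb{C}^2$, $\kappa\ne0$, is critical if $h_n(\kappa,c)=0$ for some $n\in\mathbb{N}$ (there are at most two such $n$; $n_+$ and $n_-$ denote the largest and smallest). $J(\kappa,c)$ is the ideal generated by $K-\kappa$, $C_1-c$; $W(\eta;\kappa,c)=UJ(\kappa,c)v_\eta$, $V(\eta;\kappa,c)=M(\eta)/W(\eta;\kappa,c)$. $u_\pm=u(n_\pm,0,1)$ and $\bar u_\pm$ is its image in $V(\eta;\kappa,c)$. $\kappa_\epsilon=q^{-3n_\epsilon}\kappa$, $c_\epsilon=\frac{q^{n_\epsilon-3}\kappa^{-1}+q^{3-n_\epsilon}\kappa}{(q-q^{-1})^2}$ for $\epsilon\in\{+,-\}$. *)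

theory Defs
  imports Complex_Main "HOL-Library.Poly_Mapping"
begin

datatype gen = GE1 | GE2 | GF1 | GF2 | GK1 | GK1i | GK2 | GK2i
  \<comment> \<open>GK1i, GK2i stand for K_1^{-1}, K_2^{-1}\<close>

datatype word = Word "gen list"

instantiation word :: monoid_add
begin
definition zero_word :: word where "zero_word = Word []"
fun plus_word :: "word \<Rightarrow> word \<Rightarrow> word" where
  "plus_word (Word xs) (Word ys) = Word (xs @ ys)"
instance
proof
  fix a b c :: word
  show "a + b + c = a + (b + c)" by (cases a; cases b; cases c) simp
  show "0 + a = a" by (cases a) (simp add: zero_word_def)
  show "a + 0 = a" by (cases a) (simp add: zero_word_def)
qed
end

text \<open>Noncommutative polynomials over the complex numbers in the generators:
  finitely supported functions on words; multiplication is concatenation-convolution.\<close>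
type_synonym fa = "word \<Rightarrow>\<^sub>0 complex"

definition gen :: "gen \<Rightarrow> fa" where "gen g = Poly_Mapping.single (Word [g]) 1"

definition sc :: "complex \<Rightarrow> fa" where "sc c = Poly_Mapping.single 0 c"

abbreviation "E1 \<equiv> gen GE1"
abbreviation "E2 \<equiv> gen GE2"
abbreviation "F1 \<equiv> gen GF1"
abbreviation "F2 \<equiv> gen GF2"
abbreviation "K1 \<equiv> gen GK1"
abbreviation "K1i \<equiv> gen GK1i"
abbreviation "K2 \<equiv> gen GK2"
abbreviation "K2i \<equiv> gen GK2i"

definition Eg :: "nat \<Rightarrow> fa" where "Eg i = (if i = 1 then E1 else E2)"
definition Fg :: "nat \<Rightarrow> fa" where "Fg i = (if i = 1 then F1 else F2)"
definition Kg :: "nat \<Rightarrow> fa" where "Kg i = (if i = 1 then K1 else K2)"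
definition Kig :: "nat \<Rightarrow> fa" where "Kig i = (if i = 1 then K1i else K2i)"

definition cartan :: "nat \<Rightarrow> nat \<Rightarrow> int" where
  "cartan i j = (if i = j then 2 else -1)"

text \<open>The Jimbo relations of U_q(sl_3) (as elements of the free algebra that must vanish).\<close>
definition jimbo_rels :: "complex \<Rightarrow> fa set" where
  "jimbo_rels q =
     {Kg i * Kig i - 1 | i. i \<in> {1,2}} \<union> {Kig i * Kg i - 1 | i. i \<in> {1,2}}
   \<union> {Kg i * Kg j - Kg j * Kg i | i j. i \<in> {1,2} \<and> j \<in> {1,2}}
   \<union> {Kg i * Eg j * Kig i - sc (q powi cartan i j) * Eg j | i j. i \<in> {1,2} \<and> j \<in> {1,2}}
   \<union> {Kg i * Fg j * Kig i - sc (q powi (- cartan i j)) * Fg j | i j. i \<in> {1,2} \<and> j \<in> {1,2}}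
   \<union> {Eg i * Fg j - Fg j * Eg i
        - (if i = j then sc (1 / (q - inverse q)) * (Kg i - Kig i) else 0)
        | i j. i \<in> {1,2} \<and> j \<in> {1,2}}
   \<union> {Eg i ^ 2 * Eg j - sc (q + inverse q) * Eg i * Eg j * Eg i + Eg j * Eg i ^ 2
        | i j. i \<in> {1,2} \<and> j \<in> {1,2} \<and> i \<noteq> j}
   \<union> {Fg i ^ 2 * Fg j - sc (q + inverse q) * Fg i * Fg j * Fg i + Fg j * Fg i ^ 2
        | i j. i \<in> {1,2} \<and> j \<in> {1,2} \<and> i \<noteq> j}"

definition F3 :: "complex \<Rightarrow> fa" where "F3 q = F1 * F2 - sc q * F2 * F1"

definition Kel :: fa where "Kel = K1 * K2 ^ 2"
definition Kinv :: fa where "Kinv = K1i * K2i ^ 2"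

definition C1 :: "complex \<Rightarrow> fa" where
  "C1 q = F1 * E1 + sc (1 / (q - inverse q) ^ 2) * (sc q * K1 + sc (inverse q) * K1i)"

definition qint :: "complex \<Rightarrow> nat \<Rightarrow> complex" where
  "qint q k = (q ^ k - inverse q ^ k) / (q - inverse q)"

definition qfact :: "complex \<Rightarrow> nat \<Rightarrow> complex" where
  "qfact q k = (\<Prod>i\<in>{1..k}. qint q i)"

definition qbinom :: "complex \<Rightarrow> nat \<Rightarrow> nat \<Rightarrow> complex" where
  "qbinom q n k = (if k \<le> n then qfact q n / (qfact q k * qfact q (n - k)) else 0)"

section \<open>The vectors u(n,0,1) (as elements of the free algebra, to be applied to v_eta)\<close>

text \<open>The exponent k(2n+2j+k-7)/2 is always an integer since k(k-7) is even.\<close>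
definition acoef :: "complex \<Rightarrow> complex \<Rightarrow> nat \<Rightarrow> nat \<Rightarrow> nat \<Rightarrow> complex" where
  "acoef q \<alpha> n k j =
     (-1) ^ j * \<alpha> ^ k * (q\<^sup>2 - 1) ^ k * q powi (int j * (int n - 3))
     * q powi ((int k * (2 * int n + 2 * int j + int k - 7)) div 2)
     * qbinom q n k * qbinom q (n - k) j"

definition u01 :: "complex \<Rightarrow> complex \<Rightarrow> nat \<Rightarrow> fa" where
  "u01 q \<alpha> n = (\<Sum>k\<in>{0..n}. \<Sum>j\<in>{0..n-k}.
      sc (acoef q \<alpha> n k j) * F2 ^ (n - k) * F3 q ^ k * K2 ^ (2 * j) * Kinv ^ (2 * j + k))"

text \<open>V(eta;kappa,c) = M(eta)/W(eta;kappa,c) with M(eta) = U/U(E_1-alpha, E_2) and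
  W = U J(kappa,c) v_eta.  Pulling back to the free algebra, V = fa / Nsub, where Nsub is the
  left ideal generated by the two-sided ideal of the Jimbo relations, by E_1 - alpha, E_2
  (the kernel of eta), and by J(kappa,c) (the ideal of C[K^{+-1},C_1] generated by K - kappa,
  C_1 - c), the latter multiplied by arbitrary elements of the algebra.\<close>

inductive_set Kalg :: "complex \<Rightarrow> fa set" for q where
  "sc a \<in> Kalg q"
| "Kel \<in> Kalg q"
| "Kinv \<in> Kalg q"
| "C1 q \<in> Kalg q"
| "x \<in> Kalg q \<Longrightarrow> y \<in> Kalg q \<Longrightarrow> x + y \<in> Kalg q"
| "x \<in> Kalg q \<Longrightarrow> y \<in> Kalg q \<Longrightarrow> x * y \<in> Kalg q"

definition Jideal :: "complex \<Rightarrow> complex \<Rightarrow> complex \<Rightarrow> fa set" where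
  "Jideal q \<kappa> c = {a * (Kel - sc \<kappa>) + b * (C1 q - sc c) | a b. a \<in> Kalg q \<and> b \<in> Kalg q}"

inductive_set Nsub :: "complex \<Rightarrow> complex \<Rightarrow> complex \<Rightarrow> complex \<Rightarrow> fa set"
  for q \<alpha> \<kappa> c where
  zero: "0 \<in> Nsub q \<alpha> \<kappa> c"
| add: "x \<in> Nsub q \<alpha> \<kappa> c \<Longrightarrow> y \<in> Nsub q \<alpha> \<kappa> c \<Longrightarrow> x + y \<in> Nsub q \<alpha> \<kappa> c"
| lmult: "x \<in> Nsub q \<alpha> \<kappa> c \<Longrightarrow> a * x \<in> Nsub q \<alpha> \<kappa> c"
| rel: "r \<in> jimbo_rels q \<Longrightarrow> a * r * b \<in> Nsub q \<alpha> \<kappa> c"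
| eta1: "E1 - sc \<alpha> \<in> Nsub q \<alpha> \<kappa> c"
| eta2: "E2 \<in> Nsub q \<alpha> \<kappa> c"
| J: "j \<in> Jideal q \<kappa> c \<Longrightarrow> j \<in> Nsub q \<alpha> \<kappa> c"

text \<open>x v = y v in V(eta;kappa,c), for the generating vector v (image of v_eta).\<close>
definition eqV :: "complex \<Rightarrow> complex \<Rightarrow> complex \<Rightarrow> complex \<Rightarrow> fa \<Rightarrow> fa \<Rightarrow> bool" where
  "eqV q \<alpha> \<kappa> c x y \<longleftrightarrow> x - y \<in> Nsub q \<alpha> \<kappa> c"

definition hfun :: "complex \<Rightarrow> nat \<Rightarrow> complex \<Rightarrow> complex \<Rightarrow> complex" where
  "hfun q n \<kappa> c = q powi (3 - 2 * int n) * \<kappa> + q powi (2 * int n - 3) * inverse \<kappa>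
                   - (q - inverse q)\<^sup>2 * c"

definition critset :: "complex \<Rightarrow> complex \<Rightarrow> complex \<Rightarrow> nat set" where
  "critset q \<kappa> c = {n. n \<ge> 1 \<and> hfun q n \<kappa> c = 0}"

definition critical :: "complex \<Rightarrow> complex \<Rightarrow> complex \<Rightarrow> bool" where
  "critical q \<kappa> c \<longleftrightarrow> \<kappa> \<noteq> 0 \<and> critset q \<kappa> c \<noteq> {}"

definition nplus :: "complex \<Rightarrow> complex \<Rightarrow> complex \<Rightarrow> nat" where
  "nplus q \<kappa> c = Max (critset q \<kappa> c)"
definition nminus :: "complex \<Rightarrow> complex \<Rightarrow> complex \<Rightarrow> nat" where
  "nminus q \<kappa> c = Min (critset q \<kappa> c)"

definition kappa_eps :: "complex \<Rightarrow> complex \<Rightarrow> nat \<Rightarrow> complex" where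
  "kappa_eps q \<kappa> m = q powi (- 3 * int m) * \<kappa>"
definition c_eps :: "complex \<Rightarrow> complex \<Rightarrow> nat \<Rightarrow> complex" where
  "c_eps q \<kappa> m = (q powi (int m - 3) * inverse \<kappa> + q powi (3 - int m) * \<kappa>) / (q - inverse q)\<^sup>2"

end

(*
  Eliminating the factors K^-1 (which act by \<kappa>^-1), u(n,0,1) v is a combination of the vectors
  F\<^sub>2^(n-k) F\<^sub>3^k K\<^sub>2^(2j) v.  K q-commutes with F\<^sub>2, F\<^sub>3, K\<^sub>2 and acts on v by \<kappa>, so each of these
  vectors is a K-eigenvector with eigenvalue q^(-3n) \<kappa>.  For C\<^sub>1 = F\<^sub>1 E\<^sub>1 + (q K\<^sub>1 + q^-1 K\<^sub>1^-1)/(q - q^-1)^2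
  one moves E\<^sub>1, F\<^sub>1 and K\<^sub>1^(+-1) to the right through the monomial (the Serre relations make F\<^sub>3
  q-commute with F\<^sub>1 and F\<^sub>2) and uses E\<^sub>1 v = \<alpha> v, C\<^sub>1 v = c v: C\<^sub>1 sends each monomial to a
  combination of six neighbouring ones.  Shifting indices, the coefficient of F\<^sub>2^(n-k) F\<^sub>3^k K\<^sub>2^(2j) v
  in C\<^sub>1 u(n,0,1) v is a_kj times a rational function of q^k, q^j, q^n, \<kappa>, c; when h_n(\<kappa>,c) = 0 it
  equals c_\<epsilon>.  Finally the critical n are the n with q^(2n-3) a root of a fixed quadratic, so there
  are finitely many of them and n_+, n_- are among them.
*)

theory Submission
  imports Defs
begin

lemma mult_single_zero_right:
  "(p :: 'a::monoid_add \<Rightarrow>\<^sub>0 'b::semiring_0) * Poly_Mapping.single 0 s = Poly_Mapping.map (\<lambda>x. x * s) p"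
proof (transfer fixing: s)
  fix p :: "'a \<Rightarrow> 'b"
  have delta: "(\<Sum>l. ((s when 0 = l) when x = k + l)) = (s when x = k)" for x k :: 'a
  proof -
    have "(\<lambda>l. ((s when 0 = l) when x = k + l)) = (\<lambda>l. if l = 0 then (s when x = k) else 0)"
      by (auto simp: fun_eq_iff when_def)
    then show ?thesis by (simp only: Sum_any.delta)
  qed
  have delta': "(\<Sum>k. p k * (s when x = k)) = p x * s" for x
  proof -
    have "(\<lambda>k. p k * (s when x = k)) = (\<lambda>k. if k = x then p k * s else 0)"
      by (auto simp: fun_eq_iff when_def)
    then show ?thesis by (simp only: Sum_any.delta)
  qed
  show "prod_fun p (\<lambda>k'. s when 0 = k') = (\<lambda>k. p k * s when p k \<noteq> 0)"
    unfolding prod_fun_def delta delta' by (simp add: fun_eq_iff when_def)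
qed

lemma sc_commute: "x * sc s = sc s * (x :: fa)"
  unfolding sc_def mult_single_zero_right mult_map_scale_conv_mult[symmetric]
  by (metis (no_types) mult.commute)

lemma sc_left_commute: "x * (sc s * y) = sc s * (x * (y :: fa))"
  by (metis mult.assoc sc_commute)

lemma sc_mult: "sc a * sc b = sc (a * b)"
  by (simp add: sc_def mult_single)

lemma sc_mult_assoc: "sc a * (sc b * x) = sc (a * b) * x"
  by (simp add: sc_mult mult.assoc[symmetric])

lemma sc_add: "sc a + sc b = sc (a + b)"
  by (simp add: sc_def single_add)

lemma sc_diff: "sc a - sc b = sc (a - b)"
  by (simp add: sc_def single_diff)

lemma sc_0 [simp]: "sc 0 = 0"
  by (simp add: sc_def)

lemma sc_1 [simp]: "sc 1 = 1"
  by (simp add: sc_def)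

section \<open>Equality in \<open>U\<^sub>q(sl\<^sub>3)\<close>\<close>

inductive_set rel_ideal :: "complex \<Rightarrow> fa set" for q where
  rel: "r \<in> jimbo_rels q \<Longrightarrow> a * r * b \<in> rel_ideal q"
| zero: "0 \<in> rel_ideal q"
| add: "x \<in> rel_ideal q \<Longrightarrow> y \<in> rel_ideal q \<Longrightarrow> x + y \<in> rel_ideal q"

lemma rel_ideal_mult_left: "x \<in> rel_ideal q \<Longrightarrow> a * x \<in> rel_ideal q"
proof (induction rule: rel_ideal.induct)
  case (rel r b c)
  then show ?case using rel_ideal.rel[of r q "a * b" c] by (simp add: mult.assoc)
qed (auto simp: distrib_left intro: rel_ideal.intros)

lemma rel_ideal_mult_right: "x \<in> rel_ideal q \<Longrightarrow> x * a \<in> rel_ideal q"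
proof (induction rule: rel_ideal.induct)
  case (rel r b c)
  then show ?case using rel_ideal.rel[of r q b "c * a"] by (simp add: mult.assoc)
qed (auto simp: distrib_right intro: rel_ideal.intros)

lemma rel_ideal_uminus: "x \<in> rel_ideal q \<Longrightarrow> - x \<in> rel_ideal q"
  using rel_ideal_mult_left[of x q "-1"] by simp

lemma rel_ideal_subset_Nsub: "rel_ideal q \<subseteq> Nsub q \<alpha> \<kappa> c"
proof
  show "x \<in> Nsub q \<alpha> \<kappa> c" if "x \<in> rel_ideal q" for x
    using that by induction (auto intro: Nsub.intros)
qed

definition ueq :: "complex \<Rightarrow> fa \<Rightarrow> fa \<Rightarrow> bool" where
  "ueq q x y \<longleftrightarrow> x - y \<in> rel_ideal q"

lemma ueq_refl [simp]: "ueq q x x"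
  by (simp add: ueq_def rel_ideal.zero)

lemma ueq_sym: "ueq q x y \<Longrightarrow> ueq q y x"
  unfolding ueq_def using rel_ideal_uminus by fastforce

lemma ueq_trans [trans]: "ueq q x y \<Longrightarrow> ueq q y z \<Longrightarrow> ueq q x z"
  unfolding ueq_def using rel_ideal.add by fastforce

lemma ueq_add: "ueq q a b \<Longrightarrow> ueq q c d \<Longrightarrow> ueq q (a + c) (b + d)"
  unfolding ueq_def using rel_ideal.add by (fastforce simp: algebra_simps)

lemma ueq_diff: "ueq q a b \<Longrightarrow> ueq q c d \<Longrightarrow> ueq q (a - c) (b - d)"
  unfolding ueq_def using rel_ideal.add rel_ideal_uminus by (fastforce simp: algebra_simps)

lemma ueq_mult: "ueq q a b \<Longrightarrow> ueq q c d \<Longrightarrow> ueq q (a * c) (b * d)"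
proof -
  assume "ueq q a b" "ueq q c d"
  then have "(a - b) * c + b * (c - d) \<in> rel_ideal q"
    unfolding ueq_def by (intro rel_ideal.add rel_ideal_mult_left rel_ideal_mult_right)
  then show ?thesis unfolding ueq_def by (simp add: algebra_simps)
qed

lemma ueq_mult_left: "ueq q c d \<Longrightarrow> ueq q (a * c) (a * d)"
  by (rule ueq_mult[OF ueq_refl])

lemma ueq_mult_right: "ueq q a b \<Longrightarrow> ueq q (a * c) (b * c)"
  by (rule ueq_mult[OF _ ueq_refl])

lemma ueq_mult_both: "ueq q x y \<Longrightarrow> ueq q (a * x * b) (a * y * b)"
  by (intro ueq_mult ueq_refl)

lemma ueq_of_rel: "r \<in> jimbo_rels q \<Longrightarrow> x - y = r \<Longrightarrow> ueq q x y"
  unfolding ueq_def using rel_ideal.rel[of r q 1 1] by simp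

lemma jimbo_rels_K_inverse:
  "i \<in> {1,2} \<Longrightarrow> Kg i * Kig i - 1 \<in> jimbo_rels q"
  "i \<in> {1,2} \<Longrightarrow> Kig i * Kg i - 1 \<in> jimbo_rels q"
  by (auto simp: jimbo_rels_def)

lemma jimbo_rels_K_commute:
  "i \<in> {1,2} \<Longrightarrow> j \<in> {1,2} \<Longrightarrow> Kg i * Kg j - Kg j * Kg i \<in> jimbo_rels q"
  by (auto simp: jimbo_rels_def)

lemma jimbo_rels_K_conj:
  "i \<in> {1,2} \<Longrightarrow> j \<in> {1,2} \<Longrightarrow> Kg i * Eg j * Kig i - sc (q powi cartan i j) * Eg j \<in> jimbo_rels q"
  "i \<in> {1,2} \<Longrightarrow> j \<in> {1,2} \<Longrightarrow> Kg i * Fg j * Kig i - sc (q powi (- cartan i j)) * Fg j \<in> jimbo_rels q"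
  by (auto simp: jimbo_rels_def)

lemma jimbo_rels_E_F:
  "i \<in> {1,2} \<Longrightarrow> j \<in> {1,2} \<Longrightarrow> Eg i * Fg j - Fg j * Eg i
     - (if i = j then sc (1 / (q - inverse q)) * (Kg i - Kig i) else 0) \<in> jimbo_rels q"
  by (auto simp: jimbo_rels_def)

lemma jimbo_rels_Serre_F:
  "i \<in> {1,2} \<Longrightarrow> j \<in> {1,2} \<Longrightarrow> i \<noteq> j \<Longrightarrow>
     Fg i ^ 2 * Fg j - sc (q + inverse q) * Fg i * Fg j * Fg i + Fg j * Fg i ^ 2 \<in> jimbo_rels q"
  by (auto simp: jimbo_rels_def)

lemmas gen_defs = Kg_def Kig_def Eg_def Fg_def cartan_def

lemma K1_K1i: "ueq q (K1 * K1i) 1"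
  by (rule ueq_of_rel[OF jimbo_rels_K_inverse(1)[of 1]]) (simp_all add: gen_defs)

lemma K1i_K1: "ueq q (K1i * K1) 1"
  by (rule ueq_of_rel[OF jimbo_rels_K_inverse(2)[of 1]]) (simp_all add: gen_defs)

lemma K2_K2i: "ueq q (K2 * K2i) 1"
  by (rule ueq_of_rel[OF jimbo_rels_K_inverse(1)[of 2]]) (simp_all add: gen_defs)

lemma K2i_K2: "ueq q (K2i * K2) 1"
  by (rule ueq_of_rel[OF jimbo_rels_K_inverse(2)[of 2]]) (simp_all add: gen_defs)

lemma K1_K2_commute: "ueq q (K1 * K2) (K2 * K1)"
  by (rule ueq_of_rel[OF jimbo_rels_K_commute[of 1 2]]) (simp_all add: gen_defs)

lemma K2_conj_E1: "ueq q (K2 * E1 * K2i) (sc (inverse q) * E1)"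
  by (rule ueq_of_rel[OF jimbo_rels_K_conj(1)[of 2 1]]) (simp_all add: gen_defs)

lemma K1_conj_F1: "ueq q (K1 * F1 * K1i) (sc (inverse q ^ 2) * F1)"
  by (rule ueq_of_rel[OF jimbo_rels_K_conj(2)[of 1 1]])
    (simp_all add: gen_defs power_int_minus power_inverse)

lemma K1_conj_F2: "ueq q (K1 * F2 * K1i) (sc q * F2)"
  by (rule ueq_of_rel[OF jimbo_rels_K_conj(2)[of 1 2]]) (simp_all add: gen_defs)

lemma K2_conj_F1: "ueq q (K2 * F1 * K2i) (sc q * F1)"
  by (rule ueq_of_rel[OF jimbo_rels_K_conj(2)[of 2 1]]) (simp_all add: gen_defs)

lemma K2_conj_F2: "ueq q (K2 * F2 * K2i) (sc (inverse q ^ 2) * F2)"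
  by (rule ueq_of_rel[OF jimbo_rels_K_conj(2)[of 2 2]])
    (simp_all add: gen_defs power_int_minus power_inverse)

lemma E1_F1_commutator: "ueq q (E1 * F1) (F1 * E1 + sc (1 / (q - inverse q)) * (K1 - K1i))"
  by (rule ueq_of_rel[OF jimbo_rels_E_F[of 1 1]]) (simp_all add: gen_defs algebra_simps)

lemma E1_F2_commute: "ueq q (E1 * F2) (F2 * E1)"
  by (rule ueq_of_rel[OF jimbo_rels_E_F[of 1 2]]) (simp_all add: gen_defs)

lemma Serre_F1_F2: "ueq q (F1 * (F1 * F2)) (sc (q + inverse q) * (F1 * (F2 * F1)) - F2 * (F1 * F1))"
  by (rule ueq_of_rel[OF jimbo_rels_Serre_F[of 1 2]])
    (simp_all add: gen_defs algebra_simps power2_eq_square)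

lemma Serre_F2_F1: "ueq q (F1 * (F2 * F2)) (sc (q + inverse q) * (F2 * (F1 * F2)) - F2 * (F2 * F1))"
  by (rule ueq_of_rel[OF jimbo_rels_Serre_F[of 2 1]])
    (simp_all add: gen_defs algebra_simps power2_eq_square)

definition qcomm :: "complex \<Rightarrow> fa \<Rightarrow> fa \<Rightarrow> complex \<Rightarrow> bool" where
  "qcomm q X Y s \<longleftrightarrow> ueq q (X * Y) (sc s * (Y * X))"

lemma qcomm_of_conj:
  assumes "ueq q (X * Y * Xi) (sc s * Y)" "ueq q (Xi * X) 1"
  shows "qcomm q X Y s"
proof -
  have "ueq q (X * Y) (X * Y * (Xi * X))"
    using ueq_mult_left[OF ueq_sym[OF assms(2)], of "X * Y"] by simp
  also have "X * Y * (Xi * X) = (X * Y * Xi) * X" by (simp add: mult.assoc)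
  also have "ueq q \<dots> (sc s * Y * X)" by (rule ueq_mult_right[OF assms(1)])
  finally show ?thesis unfolding qcomm_def by (simp add: mult.assoc)
qed

lemma qcomm_swap:
  assumes "qcomm q X Y s" "s \<noteq> 0"
  shows "qcomm q Y X (inverse s)"
proof -
  have "ueq q (sc (inverse s) * (X * Y)) (sc (inverse s) * (sc s * (Y * X)))"
    using assms(1) unfolding qcomm_def by (rule ueq_mult_left)
  also have "sc (inverse s) * (sc s * (Y * X)) = Y * X" using assms(2) by (simp add: sc_mult_assoc)
  finally show ?thesis unfolding qcomm_def by (rule ueq_sym)
qed

lemma qcomm_inverse_left:
  assumes "qcomm q X Y s" "ueq q (X * Xi) 1" "ueq q (Xi * X) 1" "s \<noteq> 0"
  shows "qcomm q Xi Y (inverse s)"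
proof -
  have YX: "ueq q (Y * X) (sc (inverse s) * (X * Y))"
    using qcomm_swap[OF assms(1,4)] unfolding qcomm_def .
  have "ueq q (Xi * Y) (Xi * (Y * X) * Xi)"
    using ueq_mult_left[OF ueq_sym[OF assms(2)], of "Xi * Y"] by (simp add: mult.assoc)
  also have "ueq q \<dots> (Xi * (sc (inverse s) * (X * Y)) * Xi)" by (rule ueq_mult_both[OF YX])
  also have "Xi * (sc (inverse s) * (X * Y)) * Xi = sc (inverse s) * ((Xi * X) * (Y * Xi))"
    by (simp add: mult.assoc sc_left_commute[of Xi])
  also have "ueq q \<dots> (sc (inverse s) * (1 * (Y * Xi)))" by (intro ueq_mult_left ueq_mult_right assms(3))
  finally show ?thesis unfolding qcomm_def by simp
qed

lemma qcomm_mult_left: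
  assumes "qcomm q X1 Y s1" "qcomm q X2 Y s2"
  shows "qcomm q (X1 * X2) Y (s1 * s2)"
proof -
  have "X1 * X2 * Y = X1 * (X2 * Y)" by (simp add: mult.assoc)
  also have "ueq q \<dots> (X1 * (sc s2 * (Y * X2)))" using assms(2) unfolding qcomm_def
    by (rule ueq_mult_left)
  also have "X1 * (sc s2 * (Y * X2)) = sc s2 * ((X1 * Y) * X2)" by (simp add: mult.assoc sc_left_commute)
  also have "ueq q \<dots> (sc s2 * ((sc s1 * (Y * X1)) * X2))"
    using assms(1) unfolding qcomm_def by (intro ueq_mult_left ueq_mult_right)
  also have "sc s2 * ((sc s1 * (Y * X1)) * X2) = sc (s1 * s2) * (Y * (X1 * X2))"
    by (simp add: mult.assoc sc_mult_assoc mult.commute)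
  finally show ?thesis unfolding qcomm_def .
qed

lemma qcomm_mult_right:
  assumes "qcomm q X Y1 s1" "qcomm q X Y2 s2"
  shows "qcomm q X (Y1 * Y2) (s1 * s2)"
proof -
  have "X * (Y1 * Y2) = (X * Y1) * Y2" by (simp add: mult.assoc)
  also have "ueq q \<dots> ((sc s1 * (Y1 * X)) * Y2)" using assms(1) unfolding qcomm_def
    by (rule ueq_mult_right)
  also have "(sc s1 * (Y1 * X)) * Y2 = sc s1 * (Y1 * (X * Y2))" by (simp add: mult.assoc)
  also have "ueq q \<dots> (sc s1 * (Y1 * (sc s2 * (Y2 * X))))"
    using assms(2) unfolding qcomm_def by (intro ueq_mult_left)
  also have "sc s1 * (Y1 * (sc s2 * (Y2 * X))) = sc (s1 * s2) * ((Y1 * Y2) * X)"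
    by (simp add: mult.assoc sc_mult_assoc sc_left_commute[of Y1])
  finally show ?thesis unfolding qcomm_def .
qed

lemma qcomm_one_right: "qcomm q X 1 1"
  by (simp add: qcomm_def)

lemma qcomm_one_left: "qcomm q 1 Y 1"
  by (simp add: qcomm_def)

lemma qcomm_power_right: "qcomm q X Y s \<Longrightarrow> qcomm q X (Y ^ n) (s ^ n)"
  by (induction n) (auto simp: qcomm_one_right intro: qcomm_mult_right)

lemma qcomm_power_left: "qcomm q X Y s \<Longrightarrow> qcomm q (X ^ n) Y (s ^ n)"
  by (induction n) (auto simp: qcomm_one_left intro: qcomm_mult_left)

lemma qcomm_diff_right:
  assumes "qcomm q X Y1 s" "qcomm q X Y2 s"
  shows "qcomm q X (Y1 - sc t * Y2) s"
proof -
  have "X * (Y1 - sc t * Y2) = X * Y1 - sc t * (X * Y2)" by (simp add: algebra_simps sc_left_commute)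
  also have "ueq q \<dots> (sc s * (Y1 * X) - sc t * (sc s * (Y2 * X)))"
    using assms unfolding qcomm_def by (intro ueq_diff ueq_mult_left)
  also have "sc s * (Y1 * X) - sc t * (sc s * (Y2 * X)) = sc s * ((Y1 - sc t * Y2) * X)"
    by (simp add: algebra_simps sc_mult_assoc mult.commute)
  finally show ?thesis unfolding qcomm_def .
qed

lemma qcomm_K1_F1: "qcomm q K1 F1 (inverse q ^ 2)"
  by (rule qcomm_of_conj[OF K1_conj_F1 K1i_K1])

lemma qcomm_K1_F2: "qcomm q K1 F2 q"
  by (rule qcomm_of_conj[OF K1_conj_F2 K1i_K1])

lemma qcomm_K2_F1: "qcomm q K2 F1 q"
  by (rule qcomm_of_conj[OF K2_conj_F1 K2i_K2])

lemma qcomm_K2_F2: "qcomm q K2 F2 (inverse q ^ 2)"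
  by (rule qcomm_of_conj[OF K2_conj_F2 K2i_K2])

lemma qcomm_K2_E1: "qcomm q K2 E1 (inverse q)"
  by (rule qcomm_of_conj[OF K2_conj_E1 K2i_K2])

lemma qcomm_K1_K2: "qcomm q K1 K2 1"
  using K1_K2_commute by (simp add: qcomm_def)

lemma qcomm_K2_K1: "qcomm q K2 K1 1"
  using qcomm_swap[OF qcomm_K1_K2] by simp

lemma qcomm_E1_F2: "qcomm q E1 F2 1"
  using E1_F2_commute by (simp add: qcomm_def)

lemma F3_eq: "F3 q = F1 * F2 - sc q * (F2 * F1)"
  by (simp add: F3_def mult.assoc)

lemma qcomm_F3:
  assumes "qcomm q X F1 s1" "qcomm q X F2 s2"
  shows "qcomm q X (F3 q) (s1 * s2)"
  unfolding F3_eq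
  using qcomm_mult_right[OF assms] qcomm_mult_right[OF assms(2,1)]
  by (intro qcomm_diff_right) (simp_all add: mult.commute)

lemma qcomm_K1_F3: "q \<noteq> 0 \<Longrightarrow> qcomm q K1 (F3 q) (inverse q)"
  using qcomm_F3[OF qcomm_K1_F1 qcomm_K1_F2, of q] by (simp add: power2_eq_square field_simps)

lemma qcomm_K2_F3: "q \<noteq> 0 \<Longrightarrow> qcomm q K2 (F3 q) (inverse q)"
  using qcomm_F3[OF qcomm_K2_F1 qcomm_K2_F2, of q] by (simp add: power2_eq_square field_simps)

lemma qcomm_K1i_F2: "q \<noteq> 0 \<Longrightarrow> qcomm q K1i F2 (inverse q)"
  by (rule qcomm_inverse_left[OF qcomm_K1_F2 K1_K1i K1i_K1])

lemma qcomm_K1i_F3: "q \<noteq> 0 \<Longrightarrow> qcomm q K1i (F3 q) q"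
  using qcomm_inverse_left[OF qcomm_K1_F3 K1_K1i K1i_K1] by simp

lemma qcomm_K1i_K2: "qcomm q K1i K2 1"
  using qcomm_inverse_left[OF qcomm_K1_K2 K1_K1i K1i_K1] by simp

lemma qcomm_K2i_K1: "qcomm q K2i K1 1"
  using qcomm_inverse_left[OF qcomm_K2_K1 K2_K2i K2i_K2] by simp

lemma qcomm_Kel: "qcomm q K1 Y s1 \<Longrightarrow> qcomm q K2 Y s2 \<Longrightarrow> qcomm q Kel Y (s1 * s2 ^ 2)"
  unfolding Kel_def by (intro qcomm_mult_left qcomm_power_left)

lemma qcomm_Kel_F2: "q \<noteq> 0 \<Longrightarrow> qcomm q Kel F2 (inverse q ^ 3)"
  using qcomm_Kel[OF qcomm_K1_F2[of q] qcomm_K2_F2[of q]] by (simp add: field_simps eval_nat_numeral)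

lemma qcomm_Kel_F3: "q \<noteq> 0 \<Longrightarrow> qcomm q Kel (F3 q) (inverse q ^ 3)"
  using qcomm_Kel[OF qcomm_K1_F3 qcomm_K2_F3, of q] by (simp add: field_simps eval_nat_numeral)

lemma qcomm_Kel_K2: "qcomm q Kel K2 1"
  using qcomm_Kel[OF qcomm_K1_K2, of q 1] by (simp add: qcomm_def)

lemma qcomm_F1_K2: "q \<noteq> 0 \<Longrightarrow> qcomm q F1 K2 (inverse q)"
  by (rule qcomm_swap[OF qcomm_K2_F1])

lemma qcomm_E1_K2: "q \<noteq> 0 \<Longrightarrow> qcomm q E1 K2 q"
  using qcomm_swap[OF qcomm_K2_E1] by simp

text \<open>The two Serre relations say that \<open>F\<^sub>3\<close> q-commutes with \<open>F\<^sub>1\<close> and with \<open>F\<^sub>2\<close>.\<close>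

lemma qcomm_F3_F2: "q \<noteq> 0 \<Longrightarrow> qcomm q (F3 q) F2 (inverse q)"
proof -
  assume q: "q \<noteq> 0"
  have "F3 q * F2 = F1 * (F2 * F2) - sc q * (F2 * (F1 * F2))" by (simp add: F3_eq algebra_simps)
  also have "ueq q \<dots> ((sc (q + inverse q) * (F2 * (F1 * F2)) - F2 * (F2 * F1))
      - sc q * (F2 * (F1 * F2)))"
    by (intro ueq_diff Serre_F2_F1 ueq_refl)
  also have "\<dots> = sc (inverse q) * (F2 * F3 q)"
    by (simp add: F3_eq algebra_simps sc_add[symmetric] sc_mult_assoc sc_left_commute[of F2] q)
  finally show ?thesis unfolding qcomm_def .
qed

lemma qcomm_F1_F3: "q \<noteq> 0 \<Longrightarrow> qcomm q F1 (F3 q) (inverse q)"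
proof -
  assume q: "q \<noteq> 0"
  have "F1 * F3 q = F1 * (F1 * F2) - sc q * (F1 * (F2 * F1))"
    by (simp add: F3_eq algebra_simps sc_left_commute[of F1])
  also have "ueq q \<dots> ((sc (q + inverse q) * (F1 * (F2 * F1)) - F2 * (F1 * F1))
      - sc q * (F1 * (F2 * F1)))"
    by (intro ueq_diff Serre_F1_F2 ueq_refl)
  also have "\<dots> = sc (inverse q) * (F3 q * F1)"
    by (simp add: F3_eq algebra_simps sc_add[symmetric] sc_mult_assoc q)
  finally show ?thesis unfolding qcomm_def .
qed

lemma qint_0 [simp]: "qint q 0 = 0"
  by (simp add: qint_def)

lemma qint_1: "q - inverse q \<noteq> 0 \<Longrightarrow> qint q (Suc 0) = 1"
  by (simp add: qint_def)

lemma qint_Suc: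
  "q \<noteq> 0 \<Longrightarrow> q - inverse q \<noteq> 0 \<Longrightarrow> qint q (Suc b) = inverse q ^ b + q * qint q b"
  unfolding qint_def by (simp add: field_simps power_inverse)

lemma qint_Suc':
  "q \<noteq> 0 \<Longrightarrow> q - inverse q \<noteq> 0 \<Longrightarrow> qint q (Suc a) = q ^ a + inverse q * qint q a"
  unfolding qint_def by (simp add: field_simps power_inverse)

lemma power_left_commute: "x ^ n * (x * y) = x * (x ^ n * (y :: 'a::monoid_mult))"
  by (simp add: mult.assoc[symmetric] power_commutes)

lemma E1_F3_commutator:
  assumes q: "q \<noteq> 0" and D: "q - inverse q \<noteq> 0"
  shows "ueq q (E1 * F3 q) (F3 q * E1 + F2 * K1i)"
proof -
  define h where "h = sc (1 / (q - inverse q)) * (K1 - K1i)"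
  have e1: "ueq q (E1 * F1) (F1 * E1 + h)" unfolding h_def by (rule E1_F1_commutator)
  have e2: "ueq q (E1 * F2) (F2 * E1)" by (rule E1_F2_commute)
  have "E1 * F3 q = (E1 * F1) * F2 - sc q * ((E1 * F2) * F1)"
    by (simp add: F3_eq algebra_simps sc_left_commute[of E1])
  also have "ueq q \<dots> ((F1 * E1 + h) * F2 - sc q * ((F2 * E1) * F1))"
    by (intro ueq_diff ueq_mult_left ueq_mult_right e1 e2)
  also have "\<dots> = F1 * (E1 * F2) + h * F2 - sc q * (F2 * (E1 * F1))"
    by (simp add: algebra_simps)
  also have "ueq q \<dots> (F1 * (F2 * E1) + h * F2 - sc q * (F2 * (F1 * E1 + h)))"
    by (intro ueq_diff ueq_add ueq_mult_left ueq_mult_right e1 e2 ueq_refl)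
  also have "\<dots> = F3 q * E1 + (sc (1 / (q - inverse q)) * (K1 * F2 - K1i * F2) - sc q * (F2 * h))"
    by (simp add: F3_eq algebra_simps h_def)
  also have "ueq q \<dots> (F3 q * E1
      + (sc (1 / (q - inverse q)) * (sc q * (F2 * K1) - sc (inverse q) * (F2 * K1i))
      - sc q * (F2 * h)))"
    using qcomm_K1_F2[of q] qcomm_K1i_F2[OF q] unfolding qcomm_def
    by (intro ueq_add ueq_diff ueq_mult_left ueq_refl)
  also have "\<dots> = F3 q * E1 + (sc (q / (q - inverse q) - q / (q - inverse q)) * (F2 * K1)
      + sc (q / (q - inverse q) - inverse q / (q - inverse q)) * (F2 * K1i))"
    by (simp add: h_def algebra_simps sc_mult_assoc sc_left_commute[of F2] sc_diff[symmetric])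
  also have "\<dots> = F3 q * E1 + F2 * K1i"
  proof -
    have "q / (q - inverse q) - inverse q / (q - inverse q) = 1"
      using D by (simp only: diff_divide_distrib[symmetric]) simp
    then show ?thesis by simp
  qed
  finally show ?thesis .
qed

lemma E1_F3_power:
  assumes q: "q \<noteq> 0" and D: "q - inverse q \<noteq> 0"
  shows "ueq q (E1 * F3 q ^ b) (F3 q ^ b * E1 + sc (qint q b) * (F2 * F3 q ^ (b - 1) * K1i))"
proof (induction b)
  case 0
  then show ?case by simp
next
  case (Suc b)
  have F3_F2: "ueq q (F3 q ^ b * F2) (sc (inverse q ^ b) * (F2 * F3 q ^ b))"
    using qcomm_power_left[OF qcomm_F3_F2[OF q], of b] unfolding qcomm_def .
  have K1i_F3: "ueq q (K1i * F3 q) (sc q * (F3 q * K1i))"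
    using qcomm_K1i_F3[OF q] unfolding qcomm_def .
  have "E1 * F3 q ^ Suc b = (E1 * F3 q ^ b) * F3 q"
    by (simp only: power_Suc2 mult.assoc)
  also have "ueq q \<dots> ((F3 q ^ b * E1 + sc (qint q b) * (F2 * F3 q ^ (b - 1) * K1i)) * F3 q)"
    by (rule ueq_mult_right[OF Suc.IH])
  also have "\<dots> = F3 q ^ b * (E1 * F3 q) + sc (qint q b) * (F2 * F3 q ^ (b - 1) * (K1i * F3 q))"
    by (simp add: algebra_simps)
  also have "ueq q \<dots> (F3 q ^ b * (F3 q * E1 + F2 * K1i)
      + sc (qint q b) * (F2 * F3 q ^ (b - 1) * (sc q * (F3 q * K1i))))"
    by (intro ueq_add ueq_mult_left E1_F3_commutator q D K1i_F3)
  also have "\<dots> = F3 q ^ Suc b * E1 + (F3 q ^ b * F2) * K1i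
      + sc (q * qint q b) * (F2 * (F3 q ^ (b - 1) * F3 q) * K1i)"
    by (simp add: algebra_simps sc_mult_assoc sc_left_commute[of F2] sc_left_commute[where x="x ^ n" for x n]
        power_left_commute)
  also have "ueq q \<dots> (F3 q ^ Suc b * E1 + (sc (inverse q ^ b) * (F2 * F3 q ^ b)) * K1i
      + sc (q * qint q b) * (F2 * (F3 q ^ (b - 1) * F3 q) * K1i))"
    by (intro ueq_add ueq_mult_right F3_F2 ueq_refl)
  also have "\<dots> = F3 q ^ Suc b * E1 + sc (qint q (Suc b)) * (F2 * F3 q ^ (Suc b - 1) * K1i)"
  proof (cases b)
    case 0
    then show ?thesis by (simp add: qint_1[OF D])
  next
    case (Suc b')
    then have "F3 q ^ (b - 1) * F3 q = F3 q ^ b" by (simp add: power_commutes)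
    then show ?thesis by (simp add: qint_Suc[OF q D] sc_add[symmetric] algebra_simps sc_mult_assoc)
  qed
  finally show ?case .
qed

lemma F1_F2_power:
  assumes q: "q \<noteq> 0" and D: "q - inverse q \<noteq> 0"
  shows "ueq q (F1 * F2 ^ a) (sc (q ^ a) * (F2 ^ a * F1) + sc (qint q a) * (F2 ^ (a - 1) * F3 q))"
proof (induction a)
  case 0
  then show ?case by simp
next
  case (Suc a)
  have F3_F2: "ueq q (F3 q * F2) (sc (inverse q) * (F2 * F3 q))"
    using qcomm_F3_F2[OF q] unfolding qcomm_def .
  have F1_F2: "F1 * F2 = F3 q + sc q * (F2 * F1)"
    by (simp add: F3_eq)
  have "F1 * F2 ^ Suc a = (F1 * F2 ^ a) * F2"
    by (simp only: power_Suc2 mult.assoc)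
  also have "ueq q \<dots> ((sc (q ^ a) * (F2 ^ a * F1) + sc (qint q a) * (F2 ^ (a - 1) * F3 q)) * F2)"
    by (rule ueq_mult_right[OF Suc.IH])
  also have "\<dots> = sc (q ^ a) * (F2 ^ a * (F1 * F2)) + sc (qint q a) * (F2 ^ (a - 1) * (F3 q * F2))"
    by (simp add: algebra_simps)
  also have "ueq q \<dots> (sc (q ^ a) * (F2 ^ a * (F1 * F2))
      + sc (qint q a) * (F2 ^ (a - 1) * (sc (inverse q) * (F2 * F3 q))))"
    by (intro ueq_add ueq_mult_left F3_F2 ueq_refl)
  also have "\<dots> = sc (q ^ Suc a) * (F2 ^ Suc a * F1) + sc (q ^ a) * (F2 ^ a * F3 q)
      + sc (qint q a * inverse q) * ((F2 ^ (a - 1) * F2) * F3 q)"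
    by (simp add: F1_F2 algebra_simps sc_mult_assoc sc_left_commute[where x="x ^ n" for x n]
        power_left_commute mult.commute)
  also have "\<dots> = sc (q ^ Suc a) * (F2 ^ Suc a * F1) + sc (qint q (Suc a)) * (F2 ^ (Suc a - 1) * F3 q)"
  proof (cases a)
    case 0
    then show ?thesis by (simp add: qint_1[OF D])
  next
    case (Suc b')
    then have "F2 ^ (a - 1) * F2 = F2 ^ a" by (simp add: power_commutes)
    then show ?thesis
      by (simp add: qint_Suc'[OF q D] sc_add[symmetric] algebra_simps sc_mult_assoc mult.commute)
  qed
  finally show ?case .
qed

section \<open>The module \<open>V(\<eta>;\<kappa>,c)\<close>\<close>

lemma Nsub_diff: "x \<in> Nsub q \<alpha> \<kappa> c \<Longrightarrow> y \<in> Nsub q \<alpha> \<kappa> c \<Longrightarrow> x - y \<in> Nsub q \<alpha> \<kappa> c"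
  using Nsub.add[of x q \<alpha> \<kappa> c "- y"] Nsub.lmult[of y q \<alpha> \<kappa> c "- 1"] by simp

lemma eqV_refl [simp]: "eqV q \<alpha> \<kappa> c x x"
  by (simp add: eqV_def Nsub.zero)

lemma eqV_sym: "eqV q \<alpha> \<kappa> c x y \<Longrightarrow> eqV q \<alpha> \<kappa> c y x"
  unfolding eqV_def using Nsub.lmult[of "x - y" q \<alpha> \<kappa> c "- 1"] by simp

lemma eqV_trans [trans]: "eqV q \<alpha> \<kappa> c x y \<Longrightarrow> eqV q \<alpha> \<kappa> c y z \<Longrightarrow> eqV q \<alpha> \<kappa> c x z"
  unfolding eqV_def using Nsub.add by fastforce

lemma ueq_imp_eqV: "ueq q x y \<Longrightarrow> eqV q \<alpha> \<kappa> c x y"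
  unfolding ueq_def eqV_def using rel_ideal_subset_Nsub by blast

lemma eqV_ueq_trans [trans]: "eqV q \<alpha> \<kappa> c x y \<Longrightarrow> ueq q y z \<Longrightarrow> eqV q \<alpha> \<kappa> c x z"
  using ueq_imp_eqV eqV_trans by blast

lemma ueq_eqV_trans [trans]: "ueq q x y \<Longrightarrow> eqV q \<alpha> \<kappa> c y z \<Longrightarrow> eqV q \<alpha> \<kappa> c x z"
  using ueq_imp_eqV eqV_trans by blast

lemma eqV_add: "eqV q \<alpha> \<kappa> c a b \<Longrightarrow> eqV q \<alpha> \<kappa> c a' b' \<Longrightarrow> eqV q \<alpha> \<kappa> c (a + a') (b + b')"
  unfolding eqV_def using Nsub.add by (fastforce simp: algebra_simps)

lemma eqV_diff: "eqV q \<alpha> \<kappa> c a b \<Longrightarrow> eqV q \<alpha> \<kappa> c a' b' \<Longrightarrow> eqV q \<alpha> \<kappa> c (a - a') (b - b')"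
  unfolding eqV_def using Nsub_diff by (fastforce simp: algebra_simps)

lemma eqV_mult_left: "eqV q \<alpha> \<kappa> c x y \<Longrightarrow> eqV q \<alpha> \<kappa> c (a * x) (a * y)"
  unfolding eqV_def using Nsub.lmult by (fastforce simp: algebra_simps)

lemma eqV_sum:
  "(\<And>i. i \<in> I \<Longrightarrow> eqV q \<alpha> \<kappa> c (f i) (g i)) \<Longrightarrow> eqV q \<alpha> \<kappa> c (\<Sum>i\<in>I. f i) (\<Sum>i\<in>I. g i)"
  by (induction I rule: infinite_finite_induct) (auto intro: eqV_add)

lemma Kalg_one: "1 \<in> Kalg q"
  using Kalg.intros(1)[of 1 q] by simp

lemma Kalg_zero: "0 \<in> Kalg q"
  using Kalg.intros(1)[of 0 q] by simp

lemma Kel_minus_in_Jideal: "Kel - sc \<kappa> \<in> Jideal q \<kappa> c"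
  unfolding Jideal_def using Kalg_one Kalg_zero by force

lemma C1_minus_in_Jideal: "C1 q - sc c \<in> Jideal q \<kappa> c"
  unfolding Jideal_def using Kalg_one Kalg_zero by force

lemma Kinv_Kel: "ueq q (Kinv * Kel) 1"
proof -
  have K2i_K1: "ueq q (K2i * K1) (K1 * K2i)"
    using qcomm_K2i_K1[of q] by (simp add: qcomm_def)
  have K2i_K2i_K2_K2: "ueq q (K2i * (K2i * (K2 * K2))) 1"
  proof -
    have "K2i * (K2i * (K2 * K2)) = K2i * (K2i * K2) * K2" by (simp add: mult.assoc)
    also have "ueq q \<dots> (K2i * 1 * K2)" by (intro ueq_mult_both K2i_K2)
    also have "ueq q \<dots> 1" using K2i_K2 by simp
    finally show ?thesis .
  qed
  have "Kinv * Kel = K1i * (K2i * (K2i * K1) * (K2 * K2))"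
    by (simp add: Kinv_def Kel_def mult.assoc power2_eq_square)
  also have "ueq q \<dots> (K1i * (K2i * (K1 * K2i) * (K2 * K2)))"
    by (intro ueq_mult_both ueq_mult_left K2i_K1)
  also have "\<dots> = K1i * (K2i * K1) * (K2i * (K2 * K2))" by (simp add: mult.assoc)
  also have "ueq q \<dots> (K1i * (K1 * K2i) * (K2i * (K2 * K2)))" by (intro ueq_mult_both K2i_K1)
  also have "\<dots> = (K1i * K1) * (K2i * (K2i * (K2 * K2)))" by (simp add: mult.assoc)
  also have "ueq q \<dots> (1 * 1)" by (intro ueq_mult K1i_K1 K2i_K2i_K2_K2)
  finally show ?thesis by simp
qed

lemma K2_square_Kinv: "ueq q (K2 ^ 2 * Kinv) K1i"
proof -
  have K2_K1i: "ueq q (K2 * K1i) (K1i * K2)"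
    using qcomm_swap[OF qcomm_K1i_K2, of q] by (simp add: qcomm_def)
  have "K2 ^ 2 * Kinv = K2 * (K2 * K1i) * (K2i * K2i)"
    by (simp add: Kinv_def mult.assoc power2_eq_square)
  also have "ueq q \<dots> (K2 * (K1i * K2) * (K2i * K2i))" by (intro ueq_mult_both K2_K1i)
  also have "\<dots> = (K2 * K1i) * ((K2 * K2i) * K2i)" by (simp add: mult.assoc)
  also have "ueq q \<dots> ((K1i * K2) * (1 * K2i))" by (intro ueq_mult K2_K1i ueq_mult_right K2_K2i)
  also have "\<dots> = K1i * (K2 * K2i)" by (simp add: mult.assoc)
  also have "ueq q \<dots> (K1i * 1)" by (intro ueq_mult_left K2_K2i)
  finally show ?thesis by simp
qed

locale quotient_module =
  fixes q \<alpha> \<kappa> c :: complex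
  assumes q_nonzero: "q \<noteq> 0"
    and q_inverse_diff_nonzero: "q - inverse q \<noteq> 0"
    and \<alpha>_nonzero: "\<alpha> \<noteq> 0"
    and \<kappa>_nonzero: "\<kappa> \<noteq> 0"
begin

abbreviation veq :: "fa \<Rightarrow> fa \<Rightarrow> bool" where
  "veq \<equiv> eqV q \<alpha> \<kappa> c"

abbreviation qdiff2 :: complex where
  "qdiff2 \<equiv> (q - inverse q)\<^sup>2"

lemma veq_mult_E1: "veq (x * E1) (sc \<alpha> * x)"
proof -
  have "x * (E1 - sc \<alpha>) \<in> Nsub q \<alpha> \<kappa> c" by (intro Nsub.lmult Nsub.eta1)
  then show ?thesis unfolding eqV_def by (simp add: algebra_simps sc_commute)
qed

lemma veq_mult_Kel: "veq (x * Kel) (sc \<kappa> * x)"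
proof -
  have "x * (Kel - sc \<kappa>) \<in> Nsub q \<alpha> \<kappa> c" by (intro Nsub.lmult Nsub.J Kel_minus_in_Jideal)
  then show ?thesis unfolding eqV_def by (simp add: algebra_simps sc_commute)
qed

lemma veq_mult_Kinv: "veq (x * Kinv) (sc (inverse \<kappa>) * x)"
proof -
  have A: "x * Kinv * (Kel - sc \<kappa>) \<in> Nsub q \<alpha> \<kappa> c" by (intro Nsub.lmult Nsub.J Kel_minus_in_Jideal)
  have B: "x * (Kinv * Kel - 1) \<in> Nsub q \<alpha> \<kappa> c"
    using Kinv_Kel rel_ideal_mult_left rel_ideal_subset_Nsub unfolding ueq_def by blast
  have "sc (inverse \<kappa>) * (x * (Kinv * Kel - 1)) - sc (inverse \<kappa>) * (x * Kinv * (Kel - sc \<kappa>))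
      \<in> Nsub q \<alpha> \<kappa> c"
    by (rule Nsub_diff[OF Nsub.lmult[OF B] Nsub.lmult[OF A]])
  also have "sc (inverse \<kappa>) * (x * (Kinv * Kel - 1)) - sc (inverse \<kappa>) * (x * Kinv * (Kel - sc \<kappa>))
      = x * Kinv - sc (inverse \<kappa>) * x"
    using \<kappa>_nonzero
    by (simp add: algebra_simps sc_left_commute[of x] sc_left_commute[of "x * Kinv"] sc_mult_assoc mult.assoc
        sc_commute)
  finally show ?thesis unfolding eqV_def .
qed

lemma veq_mult_Kinv_power: "veq (x * Kinv ^ m) (sc (inverse \<kappa> ^ m) * x)"
proof (induction m arbitrary: x)
  case 0
  then show ?case by simp
next
  case (Suc m)
  have "x * Kinv ^ Suc m = (x * Kinv) * Kinv ^ m" by (simp add: mult.assoc)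
  also have "veq \<dots> (sc (inverse \<kappa> ^ m) * (x * Kinv))" by (rule Suc.IH)
  also have "veq \<dots> (sc (inverse \<kappa> ^ m) * (sc (inverse \<kappa>) * x))" by (intro eqV_mult_left veq_mult_Kinv)
  also have "\<dots> = sc (inverse \<kappa> ^ Suc m) * x" by (simp add: sc_mult_assoc mult.commute)
  finally show ?case .
qed

lemma veq_mult_K1i: "veq (x * K1i) (sc (inverse \<kappa>) * (x * K2 ^ 2))"
proof -
  have "ueq q (x * K1i) ((x * K2 ^ 2) * Kinv)"
    using ueq_mult_left[OF ueq_sym[OF K2_square_Kinv], of q x] by (simp add: mult.assoc)
  also have "veq \<dots> (sc (inverse \<kappa>) * (x * K2 ^ 2))" by (rule veq_mult_Kinv)
  finally show ?thesis .
qed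

text \<open>Since \<open>C\<^sub>1 - c\<close> and \<open>E\<^sub>1 - \<alpha>\<close> annihilate the generating vector, so does
  \<open>\<alpha> F\<^sub>1 - c + (q K\<^sub>1 + q\<^sup>-\<^sup>1 K\<^sub>1\<^sup>-\<^sup>1)/(q - q\<^sup>-\<^sup>1)\<^sup>2\<close>.\<close>

lemma veq_mult_F1:
  "veq (x * F1) (sc (c / \<alpha>) * x - sc (q / (\<alpha> * qdiff2)) * (x * K1)
                   - sc (inverse q / (\<alpha> * qdiff2)) * (x * K1i))"
proof -
  have A: "x * (C1 q - sc c) \<in> Nsub q \<alpha> \<kappa> c" by (intro Nsub.lmult Nsub.J C1_minus_in_Jideal)
  have B: "x * F1 * (E1 - sc \<alpha>) \<in> Nsub q \<alpha> \<kappa> c" by (intro Nsub.lmult Nsub.eta1)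
  have "sc (inverse \<alpha>) * (x * (C1 q - sc c) - x * F1 * (E1 - sc \<alpha>)) \<in> Nsub q \<alpha> \<kappa> c"
    by (rule Nsub.lmult[OF Nsub_diff[OF A B]])
  also have "sc (inverse \<alpha>) * (x * (C1 q - sc c) - x * F1 * (E1 - sc \<alpha>))
      = x * F1 - (sc (c / \<alpha>) * x - sc (q / (\<alpha> * qdiff2)) * (x * K1)
                   - sc (inverse q / (\<alpha> * qdiff2)) * (x * K1i))"
    using \<alpha>_nonzero
    by (simp add: C1_def algebra_simps sc_left_commute[of x] sc_left_commute[of "x * F1"] sc_mult_assoc
        sc_commute mult.assoc sc_diff[symmetric] sc_add[symmetric] divide_inverse)
  finally show ?thesis unfolding eqV_def .
qed

end

section \<open>Action on the monomials \<open>F\<^sub>2\<^sup>a F\<^sub>3\<^sup>b K\<^sub>2\<^sup>y\<close>\<close>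

definition fmon :: "complex \<Rightarrow> nat \<Rightarrow> nat \<Rightarrow> nat \<Rightarrow> fa" where
  "fmon q a b y = F2 ^ a * F3 q ^ b * K2 ^ y"

lemma fmon_K2_square: "fmon q a b y * K2 ^ 2 = fmon q a b (y + 2)"
  unfolding fmon_def by (simp only: mult.assoc power_add)

lemma qcomm_fmon:
  "qcomm q X F2 s1 \<Longrightarrow> qcomm q X (F3 q) s2 \<Longrightarrow> qcomm q X K2 s3 \<Longrightarrow>
     qcomm q X (fmon q a b y) (s1 ^ a * s2 ^ b * s3 ^ y)"
  unfolding fmon_def by (intro qcomm_mult_right qcomm_power_right)

context quotient_module
begin

lemma E1_fmon:
  "veq (E1 * fmon q a b y)
     (sc (\<alpha> * q ^ y) * fmon q a b y + sc (qint q b * inverse \<kappa>) * fmon q (a + 1) (b - 1) (y + 2))"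
proof -
  have E1_F2: "ueq q (E1 * F2 ^ a) (F2 ^ a * E1)"
    using qcomm_power_right[OF qcomm_E1_F2, of q a] by (simp add: qcomm_def)
  have E1_K2: "ueq q (E1 * K2 ^ y) (sc (q ^ y) * (K2 ^ y * E1))"
    using qcomm_power_right[OF qcomm_E1_K2[OF q_nonzero], of y] by (simp add: qcomm_def)
  have K1i_K2: "ueq q (K1i * K2 ^ y) (K2 ^ y * K1i)"
    using qcomm_power_right[OF qcomm_K1i_K2, of q y] by (simp add: qcomm_def)
  have "E1 * fmon q a b y = (E1 * F2 ^ a) * F3 q ^ b * K2 ^ y"
    by (simp add: fmon_def mult.assoc)
  also have "ueq q \<dots> (F2 ^ a * (E1 * F3 q ^ b) * K2 ^ y)"
    using ueq_mult_right[OF ueq_mult_right[OF E1_F2]] by (simp add: mult.assoc)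
  also have "ueq q \<dots> (F2 ^ a * (F3 q ^ b * E1 + sc (qint q b) * (F2 * F3 q ^ (b - 1) * K1i)) * K2 ^ y)"
    by (intro ueq_mult_both E1_F3_power q_nonzero q_inverse_diff_nonzero)
  also have "\<dots> = F2 ^ a * F3 q ^ b * (E1 * K2 ^ y)
      + sc (qint q b) * (F2 ^ (a + 1) * F3 q ^ (b - 1) * (K1i * K2 ^ y))"
    by (simp add: algebra_simps sc_left_commute[where x="x ^ n" for x n] sc_left_commute[of F2]
        power_left_commute)
  also have "ueq q \<dots> (F2 ^ a * F3 q ^ b * (sc (q ^ y) * (K2 ^ y * E1))
      + sc (qint q b) * (F2 ^ (a + 1) * F3 q ^ (b - 1) * (K2 ^ y * K1i)))"
    by (intro ueq_add ueq_mult_left E1_K2 K1i_K2)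
  also have "\<dots> = sc (q ^ y) * (fmon q a b y * E1) + sc (qint q b) * (fmon q (a + 1) (b - 1) y * K1i)"
    by (simp add: fmon_def mult.assoc sc_left_commute[where x="x ^ n" for x n])
  also have "veq \<dots> (sc (q ^ y) * (sc \<alpha> * fmon q a b y)
      + sc (qint q b) * (sc (inverse \<kappa>) * (fmon q (a + 1) (b - 1) y * K2 ^ 2)))"
    by (intro eqV_add eqV_mult_left veq_mult_E1 veq_mult_K1i)
  also have "\<dots> = sc (\<alpha> * q ^ y) * fmon q a b y
      + sc (qint q b * inverse \<kappa>) * fmon q (a + 1) (b - 1) (y + 2)"
    by (simp add: fmon_K2_square sc_mult_assoc mult.commute)
  finally show ?thesis .
qed

lemma F1_fmon:
  "ueq q (F1 * fmon q a b y)
     (sc (q ^ a * inverse q ^ b * inverse q ^ y) * (fmon q a b y * F1)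
         + sc (qint q a) * fmon q (a - 1) (b + 1) y)"
proof -
  have F1_F3: "ueq q (F1 * F3 q ^ b) (sc (inverse q ^ b) * (F3 q ^ b * F1))"
    using qcomm_power_right[OF qcomm_F1_F3[OF q_nonzero], of b] by (simp add: qcomm_def)
  have F1_K2: "ueq q (F1 * K2 ^ y) (sc (inverse q ^ y) * (K2 ^ y * F1))"
    using qcomm_power_right[OF qcomm_F1_K2[OF q_nonzero], of y] by (simp add: qcomm_def)
  have "F1 * fmon q a b y = (F1 * F2 ^ a) * F3 q ^ b * K2 ^ y"
    by (simp add: fmon_def mult.assoc)
  also have "ueq q \<dots> ((sc (q ^ a) * (F2 ^ a * F1) + sc (qint q a) * (F2 ^ (a - 1) * F3 q))
      * F3 q ^ b * K2 ^ y)"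
    by (intro ueq_mult_right F1_F2_power q_nonzero q_inverse_diff_nonzero)
  also have "\<dots> = sc (q ^ a) * (F2 ^ a * (F1 * F3 q ^ b) * K2 ^ y)
      + sc (qint q a) * fmon q (a - 1) (b + 1) y"
    by (simp add: fmon_def algebra_simps)
  also have "ueq q \<dots> (sc (q ^ a) * (F2 ^ a * (sc (inverse q ^ b) * (F3 q ^ b * F1)) * K2 ^ y)
      + sc (qint q a) * fmon q (a - 1) (b + 1) y)"
    by (intro ueq_add ueq_mult_left ueq_mult_right F1_F3 ueq_refl)
  also have "\<dots> = sc (q ^ a * inverse q ^ b) * (F2 ^ a * F3 q ^ b * (F1 * K2 ^ y))
      + sc (qint q a) * fmon q (a - 1) (b + 1) y"
    by (simp add: mult.assoc sc_left_commute[where x="x ^ n" for x n] sc_mult_assoc)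
  also have "ueq q \<dots> (sc (q ^ a * inverse q ^ b)
      * (F2 ^ a * F3 q ^ b * (sc (inverse q ^ y) * (K2 ^ y * F1)))
      + sc (qint q a) * fmon q (a - 1) (b + 1) y)"
    by (intro ueq_add ueq_mult_left F1_K2 ueq_refl)
  also have "\<dots> = sc (q ^ a * inverse q ^ b * inverse q ^ y) * (fmon q a b y * F1)
      + sc (qint q a) * fmon q (a - 1) (b + 1) y"
    by (simp add: fmon_def mult.assoc sc_left_commute[where x="x ^ n" for x n] sc_mult_assoc)
  finally show ?thesis .
qed

lemma qint_F1_fmon:
  "ueq q (sc (qint q b * t) * (F1 * fmon q (a + 1) (b - 1) (y + 2)))
     (sc (qint q b * t) * (sc (q ^ a * inverse q ^ b * inverse q ^ y)
         * (fmon q (a + 1) (b - 1) (y + 2) * F1)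
        + sc (qint q (a + 1)) * fmon q a b (y + 2)))"
proof (cases b)
  case 0
  then show ?thesis by simp
next
  case (Suc b')
  have "q ^ (a + 1) * inverse q ^ b' * inverse q ^ (y + 2) = q ^ a * inverse q ^ b * inverse q ^ y"
    using Suc q_nonzero by (simp add: field_simps)
  moreover have "b - 1 = b'" "b' + 1 = b" "a + 1 - 1 = a"
    using Suc by simp_all
  ultimately show ?thesis
    using F1_fmon[of "a + 1" b' "y + 2"] by (intro ueq_mult_left) (simp only:)
qed

lemma K1_fmon: "ueq q (K1 * fmon q a b y) (sc (q ^ a * inverse q ^ b) * (fmon q a b y * K1))"
  using qcomm_fmon[OF qcomm_K1_F2 qcomm_K1_F3[OF q_nonzero] qcomm_K1_K2, of a b y]
  by (simp add: qcomm_def)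

lemma K1i_fmon: "veq (K1i * fmon q a b y) (sc (inverse q ^ a * q ^ b * inverse \<kappa>) * fmon q a b (y + 2))"
proof -
  have "ueq q (K1i * fmon q a b y) (sc (inverse q ^ a * q ^ b) * (fmon q a b y * K1i))"
    using qcomm_fmon[OF qcomm_K1i_F2[OF q_nonzero] qcomm_K1i_F3[OF q_nonzero] qcomm_K1i_K2, of a b y]
    by (simp add: qcomm_def)
  also have "veq \<dots> (sc (inverse q ^ a * q ^ b) * (sc (inverse \<kappa>) * (fmon q a b y * K2 ^ 2)))"
    by (intro eqV_mult_left veq_mult_K1i)
  also have "\<dots> = sc (inverse q ^ a * q ^ b * inverse \<kappa>) * fmon q a b (y + 2)"
    by (simp add: fmon_K2_square sc_mult_assoc)
  finally show ?thesis .
qed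

lemma Kel_fmon: "veq (Kel * fmon q a b y) (sc (inverse q ^ (3 * (a + b)) * \<kappa>) * fmon q a b y)"
proof -
  have "ueq q (Kel * fmon q a b y) (sc ((inverse q ^ 3) ^ a * (inverse q ^ 3) ^ b * 1 ^ y)
      * (fmon q a b y * Kel))"
    using qcomm_fmon[OF qcomm_Kel_F2[OF q_nonzero] qcomm_Kel_F3[OF q_nonzero] qcomm_Kel_K2, of a b y]
    by (simp add: qcomm_def)
  also have "veq \<dots> (sc ((inverse q ^ 3) ^ a * (inverse q ^ 3) ^ b * 1 ^ y) * (sc \<kappa> * fmon q a b y))"
    by (intro eqV_mult_left veq_mult_Kel)
  also have "\<dots> = sc (inverse q ^ (3 * (a + b)) * \<kappa>) * fmon q a b y"
    by (simp add: sc_mult_assoc power_mult[symmetric] power_add mult.commute)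
  finally show ?thesis .
qed

lemma fmon_K1: "veq (fmon q a b (y + 2) * K1) (sc \<kappa> * fmon q a b y)"
proof -
  have K2_K1: "ueq q (K2 ^ 2 * K1) (K1 * K2 ^ 2)"
    using qcomm_power_left[OF qcomm_K2_K1, of q 2] by (simp add: qcomm_def)
  have "fmon q a b (y + 2) * K1 = fmon q a b y * (K2 ^ 2 * K1)"
    by (simp only: fmon_K2_square[symmetric] mult.assoc)
  also have "ueq q \<dots> (fmon q a b y * Kel)"
    unfolding Kel_def by (intro ueq_mult_left K2_K1)
  also have "veq \<dots> (sc \<kappa> * fmon q a b y)"
    by (rule veq_mult_Kel)
  finally show ?thesis .
qed

lemma fmon_F1:
  "veq (fmon q a b y * F1)
     (sc (c / \<alpha>) * fmon q a b y - sc (q / (\<alpha> * qdiff2)) * (fmon q a b y * K1)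
        - sc (inverse q * inverse \<kappa> / (\<alpha> * qdiff2)) * fmon q a b (y + 2))"
proof -
  have "veq (fmon q a b y * F1)
     (sc (c / \<alpha>) * fmon q a b y - sc (q / (\<alpha> * qdiff2)) * (fmon q a b y * K1)
        - sc (inverse q / (\<alpha> * qdiff2)) * (fmon q a b y * K1i))"
    by (rule veq_mult_F1)
  also have "veq \<dots> (sc (c / \<alpha>) * fmon q a b y - sc (q / (\<alpha> * qdiff2)) * (fmon q a b y * K1)
        - sc (inverse q / (\<alpha> * qdiff2)) * (sc (inverse \<kappa>) * (fmon q a b y * K2 ^ 2)))"
    by (intro eqV_diff eqV_refl eqV_mult_left veq_mult_K1i)
  also have "\<dots> = sc (c / \<alpha>) * fmon q a b y - sc (q / (\<alpha> * qdiff2)) * (fmon q a b y * K1)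
        - sc (inverse q * inverse \<kappa> / (\<alpha> * qdiff2)) * fmon q a b (y + 2)"
    by (simp add: fmon_K2_square sc_mult_assoc)
  finally show ?thesis .
qed

lemma fmon_shift_F1:
  "veq (fmon q a b (y + 2) * F1)
     (sc (c / \<alpha>) * fmon q a b (y + 2) - sc (q * \<kappa> / (\<alpha> * qdiff2)) * fmon q a b y
        - sc (inverse q * inverse \<kappa> / (\<alpha> * qdiff2)) * fmon q a b (y + 4))"
proof -
  have "veq (fmon q a b (y + 2) * F1)
     (sc (c / \<alpha>) * fmon q a b (y + 2) - sc (q / (\<alpha> * qdiff2)) * (fmon q a b (y + 2) * K1)
        - sc (inverse q * inverse \<kappa> / (\<alpha> * qdiff2)) * fmon q a b (y + 2 + 2))"
    by (rule fmon_F1)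
  also have "veq \<dots> (sc (c / \<alpha>) * fmon q a b (y + 2) - sc (q / (\<alpha> * qdiff2)) * (sc \<kappa> * fmon q a b y)
        - sc (inverse q * inverse \<kappa> / (\<alpha> * qdiff2)) * fmon q a b (y + 2 + 2))"
    by (intro eqV_diff eqV_refl eqV_mult_left fmon_K1)
  also have "\<dots> = sc (c / \<alpha>) * fmon q a b (y + 2) - sc (q * \<kappa> / (\<alpha> * qdiff2)) * fmon q a b y
        - sc (inverse q * inverse \<kappa> / (\<alpha> * qdiff2)) * fmon q a b (y + 4)"
    by (simp only: sc_mult_assoc mult.commute add.assoc numeral_plus_numeral semiring_norm
        times_divide_eq_right)
  finally show ?thesis .
qed

end

lemma sc_combination_regroup:
  fixes W0 WK W2 W3 W4 W5 W6 :: fa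
  shows "sc e1 * (sc Q * (sc g1 * W0 - sc g2 * WK - sc g3 * W2) + sc g4 * W3)
       + sc e2 * (sc Q * (sc g1 * W4 - sc g5 * W5 - sc g3 * W6) + sc g6 * W2)
       + (sc h1 * (sc k1 * WK) + sc h2 * (sc k2 * W2))
     = sc (e1 * Q * g1) * W0 + sc (h2 * k2 + e2 * g6 - e1 * Q * g3) * W2 + sc (e1 * g4) * W3
       + sc (e2 * Q * g1) * W4 - sc (e2 * Q * g5) * W5 - sc (e2 * Q * g3) * W6
           + sc (h1 * k1 - e1 * Q * g2) * WK"
  by (simp add: algebra_simps sc_mult_assoc sc_add[symmetric] sc_diff[symmetric])

context quotient_module
begin

lemma C1_fmon_expand:
  fixes a b y :: nat
  defines "Q \<equiv> q ^ a * inverse q ^ b * inverse q ^ y"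
  shows "veq (C1 q * fmon q a b y)
   (sc (\<alpha> * q ^ y * Q * (c / \<alpha>)) * fmon q a b y
   + sc (1 / qdiff2 * inverse q * (inverse q ^ a * q ^ b * inverse \<kappa>)
       + qint q b * inverse \<kappa> * qint q (a + 1)
         - \<alpha> * q ^ y * Q * (inverse q * inverse \<kappa> / (\<alpha> * qdiff2))) * fmon q a b (y + 2)
   + sc (\<alpha> * q ^ y * qint q a) * fmon q (a - 1) (b + 1) y
   + sc (qint q b * inverse \<kappa> * Q * (c / \<alpha>)) * fmon q (a + 1) (b - 1) (y + 2)
   - sc (qint q b * inverse \<kappa> * Q * (q * \<kappa> / (\<alpha> * qdiff2))) * fmon q (a + 1) (b - 1) y
   - sc (qint q b * inverse \<kappa> * Q * (inverse q * inverse \<kappa> / (\<alpha> * qdiff2)))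
       * fmon q (a + 1) (b - 1) (y + 4)
   + sc (1 / qdiff2 * q * (q ^ a * inverse q ^ b) - \<alpha> * q ^ y * Q * (q / (\<alpha> * qdiff2)))
       * (fmon q a b y * K1))"
proof -
  let ?W0 = "fmon q a b y" and ?WK = "fmon q a b y * K1" and ?W2 = "fmon q a b (y + 2)"
  let ?W3 = "fmon q (a - 1) (b + 1) y" and ?W4 = "fmon q (a + 1) (b - 1) (y + 2)"
  let ?W5 = "fmon q (a + 1) (b - 1) y" and ?W6 = "fmon q (a + 1) (b - 1) (y + 4)"
  let ?K = "sc (1 / qdiff2 * q) * (sc (q ^ a * inverse q ^ b) * ?WK)
      + sc (1 / qdiff2 * inverse q) * (sc (inverse q ^ a * q ^ b * inverse \<kappa>) * ?W2)"
  have "C1 q * fmon q a b y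
      = F1 * (E1 * ?W0) + sc (1 / qdiff2) * (sc q * (K1 * ?W0) + sc (inverse q) * (K1i * ?W0))"
    by (simp add: C1_def algebra_simps)
  also have "veq \<dots> (F1 * (sc (\<alpha> * q ^ y) * ?W0 + sc (qint q b * inverse \<kappa>) * ?W4)
      + sc (1 / qdiff2) * (sc q * (sc (q ^ a * inverse q ^ b) * ?WK)
                         + sc (inverse q) * (sc (inverse q ^ a * q ^ b * inverse \<kappa>) * ?W2)))"
    by (intro eqV_add eqV_mult_left E1_fmon K1i_fmon ueq_imp_eqV K1_fmon)
  also have "\<dots> = sc (\<alpha> * q ^ y) * (F1 * ?W0) + sc (qint q b * inverse \<kappa>) * (F1 * ?W4) + ?K"
    by (simp add: distrib_left sc_left_commute[of F1] sc_mult_assoc add.assoc)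
  also have "ueq q \<dots> (sc (\<alpha> * q ^ y) * (sc Q * (?W0 * F1) + sc (qint q a) * ?W3)
      + sc (qint q b * inverse \<kappa>) * (sc Q * (?W4 * F1) + sc (qint q (a + 1)) * ?W2) + ?K)"
    unfolding Q_def by (intro ueq_add ueq_mult_left F1_fmon qint_F1_fmon ueq_refl)
  also have "veq \<dots> (sc (\<alpha> * q ^ y) * (sc Q * (sc (c / \<alpha>) * ?W0 - sc (q / (\<alpha> * qdiff2)) * ?WK
          - sc (inverse q * inverse \<kappa> / (\<alpha> * qdiff2)) * ?W2) + sc (qint q a) * ?W3)
      + sc (qint q b * inverse \<kappa>) * (sc Q * (sc (c / \<alpha>) * ?W4 - sc (q * \<kappa> / (\<alpha> * qdiff2)) * ?W5
          - sc (inverse q * inverse \<kappa> / (\<alpha> * qdiff2)) * ?W6) + sc (qint q (a + 1)) * ?W2) + ?K)"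
    by (intro eqV_add eqV_mult_left eqV_refl fmon_F1 fmon_shift_F1)
  also have "\<dots> = sc (\<alpha> * q ^ y * Q * (c / \<alpha>)) * fmon q a b y
   + sc (1 / qdiff2 * inverse q * (inverse q ^ a * q ^ b * inverse \<kappa>)
       + qint q b * inverse \<kappa> * qint q (a + 1)
         - \<alpha> * q ^ y * Q * (inverse q * inverse \<kappa> / (\<alpha> * qdiff2))) * fmon q a b (y + 2)
   + sc (\<alpha> * q ^ y * qint q a) * fmon q (a - 1) (b + 1) y
   + sc (qint q b * inverse \<kappa> * Q * (c / \<alpha>)) * fmon q (a + 1) (b - 1) (y + 2)
   - sc (qint q b * inverse \<kappa> * Q * (q * \<kappa> / (\<alpha> * qdiff2))) * fmon q (a + 1) (b - 1) y
   - sc (qint q b * inverse \<kappa> * Q * (inverse q * inverse \<kappa> / (\<alpha> * qdiff2)))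
       * fmon q (a + 1) (b - 1) (y + 4)
   + sc (1 / qdiff2 * q * (q ^ a * inverse q ^ b) - \<alpha> * q ^ y * Q * (q / (\<alpha> * qdiff2)))
       * (fmon q a b y * K1)"
    by (rule sc_combination_regroup)
  finally show ?thesis .
qed

end

definition qint_int :: "complex \<Rightarrow> int \<Rightarrow> complex" where
  "qint_int q m = (q powi m - q powi (- m)) / (q - inverse q)"

lemma qint_eq_qint_int: "qint q n = qint_int q (int n)"
  by (simp add: qint_def qint_int_def power_int_minus power_inverse)

lemma power_inverse_power_eq_power_int:
  fixes x :: "'a::field"
  assumes "x \<noteq> 0"
  shows "x ^ a * inverse x ^ b = x powi (int a - int b)"
  using assms by (simp add: power_int_diff power_inverse divide_inverse)

context quotient_module
begin

text \<open>The coefficients of \<open>C\<^sub>1 F\<^sub>2\<^sup>a F\<^sub>3\<^sup>b K\<^sub>2\<^sup>y\<close>, extended to integer exponents.\<close>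

definition C1_coef1 :: "int \<Rightarrow> int \<Rightarrow> int \<Rightarrow> complex" where
  "C1_coef1 a b y = q powi (a - b) * c"

definition C1_coef2 :: "int \<Rightarrow> int \<Rightarrow> int \<Rightarrow> complex" where
  "C1_coef2 a b y =
     inverse \<kappa> * ((q powi (b - a - 1) - q powi (a - b - 1)) / qdiff2
         + qint_int q b * qint_int q (a + 1))"

definition C1_coef3 :: "int \<Rightarrow> int \<Rightarrow> int \<Rightarrow> complex" where
  "C1_coef3 a b y = \<alpha> * q powi y * qint_int q a"

definition C1_coef4 :: "int \<Rightarrow> int \<Rightarrow> int \<Rightarrow> complex" where
  "C1_coef4 a b y = qint_int q b * q powi (a - b - y) * c / (\<alpha> * \<kappa>)"

definition C1_coef5 :: "int \<Rightarrow> int \<Rightarrow> int \<Rightarrow> complex" where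
  "C1_coef5 a b y = qint_int q b * q powi (a - b - y + 1) / (\<alpha> * qdiff2)"

definition C1_coef6 :: "int \<Rightarrow> int \<Rightarrow> int \<Rightarrow> complex" where
  "C1_coef6 a b y = qint_int q b * q powi (a - b - y - 1) / (\<alpha> * \<kappa>\<^sup>2 * qdiff2)"

lemma qdiff2_nonzero: "qdiff2 \<noteq> 0"
  using q_inverse_diff_nonzero by simp

lemma C1_fmon_coefs:
  fixes a b y :: nat
  defines "Q \<equiv> q ^ a * inverse q ^ b * inverse q ^ y"
  shows "\<alpha> * q ^ y * Q * (c / \<alpha>) = C1_coef1 a b y"
    and "1 / qdiff2 * inverse q * (inverse q ^ a * q ^ b * inverse \<kappa>)
        + qint q b * inverse \<kappa> * qint q (a + 1)
         - \<alpha> * q ^ y * Q * (inverse q * inverse \<kappa> / (\<alpha> * qdiff2)) = C1_coef2 a b y"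
    and "\<alpha> * q ^ y * qint q a = C1_coef3 a b y"
    and "qint q b * inverse \<kappa> * Q * (c / \<alpha>) = C1_coef4 a b y"
    and "qint q b * inverse \<kappa> * Q * (q * \<kappa> / (\<alpha> * qdiff2)) = C1_coef5 a b y"
    and "qint q b * inverse \<kappa> * Q * (inverse q * inverse \<kappa> / (\<alpha> * qdiff2)) = C1_coef6 a b y"
    and "1 / qdiff2 * q * (q ^ a * inverse q ^ b) - \<alpha> * q ^ y * Q * (q / (\<alpha> * qdiff2)) = 0"
proof -
  have Q: "Q = q powi (int a - int b - int y)"
    using power_inverse_power_eq_power_int[OF q_nonzero, of a b] q_nonzero
    by (simp add: Q_def power_int_diff power_inverse divide_inverse)
  have yQ: "q ^ y * Q = q powi (int a - int b)"
    using q_nonzero by (simp add: Q_def power_int_diff field_simps power_inverse)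
  have Q_plus: "Q * q = q powi (int a - int b - int y + 1)"
    and Q_minus: "Q * inverse q = q powi (int a - int b - int y - 1)"
    unfolding Q using q_nonzero by (simp_all add: power_int_add power_int_diff divide_inverse)
  have yQ_minus: "q ^ y * Q * inverse q = q powi (int a - int b - 1)"
    unfolding mult.assoc Q_minus using q_nonzero by (simp add: power_int_add[symmetric] power_int_diff)
  have ab_minus: "inverse q * (inverse q ^ a * q ^ b) = q powi (int b - int a - 1)"
    using power_inverse_power_eq_power_int[OF q_nonzero, of b a] q_nonzero
    by (simp add: power_int_diff divide_inverse mult.commute)
  show "\<alpha> * q ^ y * Q * (c / \<alpha>) = C1_coef1 a b y"
    using \<alpha>_nonzero yQ by (simp add: C1_coef1_def field_simps)
  show "1 / qdiff2 * inverse q * (inverse q ^ a * q ^ b * inverse \<kappa>)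
      + qint q b * inverse \<kappa> * qint q (a + 1)
         - \<alpha> * q ^ y * Q * (inverse q * inverse \<kappa> / (\<alpha> * qdiff2)) = C1_coef2 a b y"
    unfolding C1_coef2_def qint_eq_qint_int
    using \<alpha>_nonzero \<kappa>_nonzero qdiff2_nonzero q_nonzero ab_minus yQ_minus by (simp add: field_simps)
  show "\<alpha> * q ^ y * qint q a = C1_coef3 a b y"
    by (simp add: C1_coef3_def qint_eq_qint_int)
  show "qint q b * inverse \<kappa> * Q * (c / \<alpha>) = C1_coef4 a b y"
    unfolding C1_coef4_def qint_eq_qint_int Q using \<alpha>_nonzero \<kappa>_nonzero by (simp add: field_simps)
  show "qint q b * inverse \<kappa> * Q * (q * \<kappa> / (\<alpha> * qdiff2)) = C1_coef5 a b y"
    unfolding C1_coef5_def qint_eq_qint_int Q_plus[symmetric] using \<kappa>_nonzero by (simp add: field_simps)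
  show "qint q b * inverse \<kappa> * Q * (inverse q * inverse \<kappa> / (\<alpha> * qdiff2)) = C1_coef6 a b y"
    unfolding C1_coef6_def qint_eq_qint_int Q_minus[symmetric] using \<kappa>_nonzero
    by (simp add: field_simps power2_eq_square)
  show "1 / qdiff2 * q * (q ^ a * inverse q ^ b) - \<alpha> * q ^ y * Q * (q / (\<alpha> * qdiff2)) = 0"
    using \<alpha>_nonzero q_nonzero qdiff2_nonzero by (simp add: Q_def field_simps)
qed

lemma C1_fmon:
  "veq (C1 q * fmon q a b y)
     (sc (C1_coef1 a b y) * fmon q a b y + sc (C1_coef2 a b y) * fmon q a b (y + 2)
      + sc (C1_coef3 a b y) * fmon q (a - 1) (b + 1) y
          + sc (C1_coef4 a b y) * fmon q (a + 1) (b - 1) (y + 2)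
      - sc (C1_coef5 a b y) * fmon q (a + 1) (b - 1) y
          - sc (C1_coef6 a b y) * fmon q (a + 1) (b - 1) (y + 4))"
  using C1_fmon_expand[of a b y] by (simp only: C1_fmon_coefs[where a=a and b=b and y=y]) simp

end

section \<open>The coefficient recurrence\<close>

text \<open>For \<open>P = q\<^sup>2 - 1\<close>, \<open>qbracket q P (q\<^sup>m)\<close> is the quantum integer \<open>[m]\<close>.\<close>

definition qbracket :: "complex \<Rightarrow> complex \<Rightarrow> complex \<Rightarrow> complex" where
  "qbracket q P t = q * (t - inverse t) / P"

text \<open>The recurrence for the coefficients of \<open>C\<^sub>1 u(n,0,1)\<close>, divided by a common factor and
  written in \<open>X = q\<^sup>k\<close>, \<open>Y = q\<^sup>j\<close>, \<open>Z = q\<^sup>n\<close>; the hypothesis on \<open>c\<close> is \<open>h\<^sub>n(\<kappa>,c) = 0\<close>.\<close>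

lemma ucoef_recurrence_identity:
  fixes q X Y Z \<kappa> \<alpha> P c cn :: complex
  assumes q: "q \<noteq> 0" and P: "P \<noteq> 0" and X: "X \<noteq> 0" and Y: "Y \<noteq> 0" and Z: "Z \<noteq> 0"
    and k: "\<kappa> \<noteq> 0" and a: "\<alpha> \<noteq> 0"
    and c: "c = (q^3 * \<kappa> / Z^2 + Z^2 / (q^3 * \<kappa>)) * (q^2 / P^2)"
    and cn: "cn = (Z / (q^3 * \<kappa>) + q^3 * \<kappa> / Z) * (q^2 / P^2)"
  shows
   "(Z / X^2 * c) * 1 * (qbracket q P (q*X) * qbracket q P (q*Z/(X*Y)))
    + (inverse \<kappa> * ((X^2/(Z*q) - Z/(X^2*q)) * (q^2 / P^2) + qbracket q P X * qbracket q P (q*Z/X)))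
        * ((-1) * q^3/(Z*X) * \<kappa>^2) * (qbracket q P (q*X) * qbracket q P Y)
    + (\<alpha> * Y^2 * qbracket q P (q*Z/X)) * (q^4/(Z*Y*X) * \<kappa> / (\<alpha> * P))
        * (qbracket q P X * qbracket q P (q*X))
    + (qbracket q P (q*X) * (Z/(X^2*Y^2)) * c / (\<alpha>*\<kappa>)) * ((-1) * \<alpha> * P * Y / q * \<kappa>)
        * (qbracket q P Y * qbracket q P (q*Z/(X*Y)))
    - (qbracket q P (q*X) * (Z/(q*X^2*Y^2)) * (q^2 / P^2) / \<alpha>) * (\<alpha>*P*Z*Y*X/(q^3*\<kappa>))
        * (qbracket q P (q*Z/(X*Y)) * qbracket q P (Z/(X*Y)))
    - (qbracket q P (q*X) * (q*Z/(X^2*Y^2)) * (q^2 / P^2) / (\<alpha>*\<kappa>^2)) * (\<alpha>*P*q*Y/(Z*X)*\<kappa>^3)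
        * (qbracket q P Y * qbracket q P (Y/q))
    = cn * (qbracket q P (q*X) * qbracket q P (q*Z/(X*Y)))"
  unfolding qbracket_def c cn
  using q X Y Z k a P by (simp add: field_simps) algebra

lemma add_double_div_2: "(x + 2 * m) div 2 = x div 2 + (m :: int)"
  by simp

lemma power_int_add_split: "(x :: 'a::field) \<noteq> 0 \<Longrightarrow> a = b + d \<Longrightarrow> x powi a = x powi b * x powi d"
  by (simp add: power_int_add)

lemma power_int_diff_1: "(x :: 'a::field) \<noteq> 0 \<Longrightarrow> x powi (m - 1) = x powi m / x"
  using power_int_diff[of x m 1] by simp

lemma power_int_add_1_nonzero: "(x :: 'a::field) \<noteq> 0 \<Longrightarrow> x powi (m + 1) = x powi m * x"
  using power_int_add_1[of x m] by simp

context quotient_module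
begin

definition ucoef :: "nat \<Rightarrow> int \<Rightarrow> int \<Rightarrow> complex" where
  "ucoef n k j = (if 0 \<le> k \<and> 0 \<le> j \<and> k + j \<le> int n
     then acoef q \<alpha> n (nat k) (nat j) * inverse \<kappa> ^ nat (2 * j + k) else 0)"

lemma ucoef_outside: "\<not> (0 \<le> k \<and> 0 \<le> j \<and> k + j \<le> int n) \<Longrightarrow> ucoef n k j = 0"
  unfolding ucoef_def by (rule if_not_P)

end

locale generic_quotient_module = quotient_module +
  assumes q_not_root_of_unity: "\<forall>m::nat. m > 0 \<longrightarrow> q ^ m \<noteq> 1"
begin

abbreviation gam1 :: "nat \<Rightarrow> int \<Rightarrow> int \<Rightarrow> complex" where
  "gam1 n k j \<equiv> C1_coef1 (int n - k) k (2 * j)"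

abbreviation gam2 :: "nat \<Rightarrow> int \<Rightarrow> int \<Rightarrow> complex" where
  "gam2 n k j \<equiv> C1_coef2 (int n - k) k (2 * j)"

abbreviation gam3 :: "nat \<Rightarrow> int \<Rightarrow> int \<Rightarrow> complex" where
  "gam3 n k j \<equiv> C1_coef3 (int n - k) k (2 * j)"

abbreviation gam4 :: "nat \<Rightarrow> int \<Rightarrow> int \<Rightarrow> complex" where
  "gam4 n k j \<equiv> C1_coef4 (int n - k) k (2 * j)"

abbreviation gam5 :: "nat \<Rightarrow> int \<Rightarrow> int \<Rightarrow> complex" where
  "gam5 n k j \<equiv> C1_coef5 (int n - k) k (2 * j)"

abbreviation gam6 :: "nat \<Rightarrow> int \<Rightarrow> int \<Rightarrow> complex" where
  "gam6 n k j \<equiv> C1_coef6 (int n - k) k (2 * j)"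


lemma q_power_nonzero: "q ^ n \<noteq> 0"
  using q_nonzero by simp

lemma qint_Suc_nonzero: "qint q (Suc x) \<noteq> 0"
proof
  assume "qint q (Suc x) = 0"
  then have "q ^ Suc x = inverse q ^ Suc x" using q_inverse_diff_nonzero by (simp add: qint_def)
  then have "q ^ Suc x * q ^ Suc x = 1" using q_nonzero by (simp add: power_inverse field_simps)
  moreover have "q ^ (2 * Suc x) = q ^ Suc x * q ^ Suc x" by (simp only: mult_2 power_add)
  ultimately have "q ^ (2 * Suc x) = 1" by simp
  moreover have "(2 * Suc x) > 0" by simp
  ultimately show False using q_not_root_of_unity by blast
qed

lemma qfact_Suc: "qfact q (Suc x) = qfact q x * qint q (Suc x)"
  unfolding qfact_def by (simp add: prod.nat_ivl_Suc' mult.commute)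

lemma qfact_nonzero: "qfact q x \<noteq> 0"
  by (induction x) (auto simp: qfact_Suc qint_Suc_nonzero, simp add: qfact_def)

definition qmultinom :: "nat \<Rightarrow> nat \<Rightarrow> nat \<Rightarrow> nat \<Rightarrow> complex" where
  "qmultinom n x y z = qfact q n / (qfact q x * qfact q y * qfact q z)"

lemma qmultinom_Suc1: "qmultinom n x y z = qmultinom n (Suc x) y z * qint q (Suc x)"
  unfolding qmultinom_def qfact_Suc using qfact_nonzero qint_Suc_nonzero by (simp add: field_simps)
lemma qmultinom_Suc2: "qmultinom n x y z = qmultinom n x (Suc y) z * qint q (Suc y)"
  unfolding qmultinom_def qfact_Suc using qfact_nonzero qint_Suc_nonzero by (simp add: field_simps)
lemma qmultinom_Suc3: "qmultinom n x y z = qmultinom n x y (Suc z) * qint q (Suc z)"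
  unfolding qmultinom_def qfact_Suc using qfact_nonzero qint_Suc_nonzero by (simp add: field_simps)

definition qtrinom :: "nat \<Rightarrow> int \<Rightarrow> int \<Rightarrow> complex" where
  "qtrinom n k j = (if 0 \<le> k \<and> 0 \<le> j \<and> k + j \<le> int n
     then qmultinom n (nat k) (nat j) (nat (int n - k - j)) else 0)"

definition qtrinom_base :: "nat \<Rightarrow> int \<Rightarrow> int \<Rightarrow> complex" where
  "qtrinom_base n k j = qmultinom n (nat (k + 1)) (nat j) (nat (int n - k - j + 1))"

lemma qint_int_0[simp]: "qint_int q 0 = 0" by (simp add: qint_int_def)
lemma qint_int_nat: "0 \<le> m \<Longrightarrow> qint_int q m = qint q (nat m)"
  by (simp add: qint_eq_qint_int)

lemma qtrinom_same: assumes "-1 \<le> k" "0 \<le> j" "k + j \<le> int n + 1"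
  shows "qtrinom n k j = qtrinom_base n k j * qint_int q (k + 1) * qint_int q (int n - k - j + 1)"
proof (cases "k = -1 \<or> k + j = int n + 1")
  case True
  then have "k + 1 = 0 \<or> int n - k - j + 1 = 0" by auto
  then show ?thesis using assms by (auto simp: qtrinom_def)
next
  case False
  then have k: "0 \<le> k" "k + j \<le> int n" using assms by auto
  have e: "nat (k + 1) = Suc (nat k)" "nat (int n - k - j + 1) = Suc (nat (int n - k - j))"
    using k by auto
  show ?thesis using k assms unfolding qtrinom_def qtrinom_base_def e
    by (simp add: qint_int_nat e
          qmultinom_Suc1[of n "nat k"] qmultinom_Suc3[of n _ _ "nat (int n - k - j)"] mult.assoc)
qed

lemma qtrinom_j_pred: assumes "-1 \<le> k" "0 \<le> j" "k + j \<le> int n + 1"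
  shows "qtrinom n k (j - 1) = qtrinom_base n k j * qint_int q (k + 1) * qint_int q j"
proof (cases "k = -1 \<or> j = 0")
  case True
  then have "k + 1 = 0 \<or> j = 0" by auto
  then show ?thesis using assms by (auto simp: qtrinom_def)
next
  case False
  then have k: "0 \<le> k" "1 \<le> j" using assms by auto
  have e: "nat (k + 1) = Suc (nat k)" "nat j = Suc (nat (j - 1))"
      "nat (int n - k - j + 1) = nat (int n - k - (j - 1))" using k by auto
  show ?thesis using k assms unfolding qtrinom_def qtrinom_base_def e
    by (simp add: qint_int_nat e qmultinom_Suc1[of n "nat k"] qmultinom_Suc2[of n _ "nat (j - 1)"] mult.assoc)
qed

lemma qtrinom_k_pred: assumes "-1 \<le> k" "0 \<le> j" "k + j \<le> int n + 1"
  shows "qtrinom n (k - 1) j = qtrinom_base n k j * qint_int q k * qint_int q (k + 1)"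
proof (cases "k \<le> 0")
  case True
  then have "k + 1 = 0 \<or> k = 0" using assms by auto
  then show ?thesis using assms True by (auto simp: qtrinom_def)
next
  case False
  then have k: "1 \<le> k" using assms by auto
  have e: "nat (k + 1) = Suc (Suc (nat (k - 1)))" "nat k = Suc (nat (k - 1))"
      "nat (int n - k - j + 1) = nat (int n - (k - 1) - j)" using k by auto
  show ?thesis using k assms unfolding qtrinom_def qtrinom_base_def e
    by (simp add: qint_int_nat e
          qmultinom_Suc1[of n "nat (k - 1)"] qmultinom_Suc1[of n "Suc (nat (k - 1))"] mult.assoc)
qed

lemma qtrinom_k_succ_j_pred: assumes "-1 \<le> k" "0 \<le> j" "k + j \<le> int n + 1"
  shows "qtrinom n (k + 1) (j - 1) = qtrinom_base n k j * qint_int q j * qint_int q (int n - k - j + 1)"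
proof (cases "j = 0 \<or> k + j = int n + 1")
  case True
  then have "j = 0 \<or> int n - k - j + 1 = 0" by auto
  then show ?thesis using assms by (auto simp: qtrinom_def)
next
  case False
  then have k: "1 \<le> j" "k + j \<le> int n" using assms by auto
  define y where "y = nat (j - 1)"
  define z where "z = nat (int n - (k + 1) - (j - 1))"
  have e0: "nat j = Suc y" "nat (int n - k - j + 1) = Suc z" "nat (j - 1) = y"
      "nat (int n - (k + 1) - (j - 1)) = z"
    using k by (auto simp: y_def z_def)
  have "qint_int q j = qint q (nat j)"
      "qint_int q (int n - k - j + 1) = qint q (nat (int n - k - j + 1))"
    using k by (auto intro!: qint_int_nat)
  then have e: "nat j = Suc y" "nat (int n - k - j + 1) = Suc z" "nat (j - 1) = y"
      "nat (int n - (k + 1) - (j - 1)) = z"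
    "qint_int q j = qint q (Suc y)" "qint_int q (int n - k - j + 1) = qint q (Suc z)"
    using e0 by simp_all
  have "qtrinom n (k + 1) (j - 1) = qmultinom n (nat (k + 1)) y z" using k assms
    unfolding qtrinom_def e by simp
  also have "\<dots> = qmultinom n (nat (k + 1)) (Suc y) (Suc z) * qint q (Suc y) * qint q (Suc z)"
    using qmultinom_Suc2[of n "nat (k + 1)" y z] qmultinom_Suc3[of n "nat (k + 1)" "Suc y" z]
      by (simp add: mult.assoc mult.commute mult.left_commute)
  finally show ?thesis unfolding qtrinom_base_def e by (simp add: mult.assoc)
qed

lemma qtrinom_k_succ: assumes "-1 \<le> k" "0 \<le> j" "k + j \<le> int n + 1"
  shows "qtrinom n (k + 1) j
      = qtrinom_base n k j * qint_int q (int n - k - j + 1) * qint_int q (int n - k - j)"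
proof (cases "int n \<le> k + j")
  case True
  then have "int n - k - j + 1 = 0 \<or> int n - k - j = 0" using assms by auto
  then show ?thesis using assms True by (auto simp: qtrinom_def)
next
  case False
  then have k: "k + j \<le> int n - 1" using assms by auto
  have e: "nat (int n - k - j + 1) = Suc (Suc (nat (int n - (k + 1) - j)))"
      "nat (int n - k - j) = Suc (nat (int n - (k + 1) - j))" using k by auto
  show ?thesis using k assms unfolding qtrinom_def qtrinom_base_def e
    by (simp add: qint_int_nat e
          qmultinom_Suc3[of n _ _ "nat (int n - (k + 1) - j)"]
          qmultinom_Suc3[of n _ _ "Suc (nat (int n - (k + 1) - j))"] mult.assoc)
qed

lemma qtrinom_k_succ_j_pred2: assumes "-1 \<le> k" "0 \<le> j" "k + j \<le> int n + 1"
  shows "qtrinom n (k + 1) (j - 2) = qtrinom_base n k j * qint_int q j * qint_int q (j - 1)"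
proof (cases "j \<le> 1")
  case True
  then have "j = 0 \<or> j - 1 = 0" using assms by auto
  then show ?thesis using assms True by (auto simp: qtrinom_def)
next
  case False
  then have k: "2 \<le> j" using assms by auto
  have e: "nat j = Suc (Suc (nat (j - 2)))" "nat (j - 1) = Suc (nat (j - 2))"
      "nat (int n - k - j + 1) = nat (int n - (k + 1) - (j - 2))" using k by auto
  show ?thesis using k assms unfolding qtrinom_def qtrinom_base_def e
    by (simp add: qint_int_nat e
          qmultinom_Suc2[of n _ "nat (j - 2)"] qmultinom_Suc2[of n _ "Suc (nat (j - 2))"] mult.assoc)
qed

definition uexp :: "nat \<Rightarrow> int \<Rightarrow> int \<Rightarrow> int" where
  "uexp n k j = j * (int n - 3) + (k * (2 * int n + 2 * j + k - 7)) div 2"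

definition Pq :: complex where
  "Pq = q^2 - 1"

lemma Pq_nonzero: "Pq \<noteq> 0"
proof
  assume "Pq = 0"
  then have "q ^ 2 = 1" by (simp add: Pq_def)
  then show False using q_not_root_of_unity by (metis zero_less_numeral)
qed

definition uprefactor :: "nat \<Rightarrow> int \<Rightarrow> int \<Rightarrow> complex" where
  "uprefactor n k j = (-1) powi j * \<alpha> powi k * Pq powi k * q powi (uexp n k j) * \<kappa> powi (- (2 * j + k))"

lemma uexp_j_pred: "uexp n k (j - 1) = uexp n k j + (3 - int n - k)"
proof -
  have "k * (2 * int n + 2 * (j - 1) + k - 7) = k * (2 * int n + 2 * j + k - 7) + 2 * (- k)"
    by (simp add: algebra_simps)
  then show ?thesis unfolding uexp_def by (simp only: add_double_div_2; simp add: algebra_simps)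
qed
lemma uexp_k_pred: "uexp n (k - 1) j = uexp n k j + (4 - int n - j - k)"
proof -
  have "(k - 1) * (2 * int n + 2 * j + (k - 1) - 7)
      = k * (2 * int n + 2 * j + k - 7) + 2 * (4 - int n - j - k)" by (simp add: algebra_simps)
  then show ?thesis unfolding uexp_def by (simp only: add_double_div_2; simp add: algebra_simps)
qed
lemma uexp_k_succ_j_pred: "uexp n (k + 1) (j - 1) = uexp n k j + (j - 1)"
proof -
  have "(k + 1) * (2 * int n + 2 * (j - 1) + (k + 1) - 7)
      = k * (2 * int n + 2 * j + k - 7) + 2 * (int n + j - 4)" by (simp add: algebra_simps)
  then show ?thesis unfolding uexp_def by (simp only: add_double_div_2; simp add: algebra_simps)
qed
lemma uexp_k_succ: "uexp n (k + 1) j = uexp n k j + (int n + j + k - 3)"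
proof -
  have "(k + 1) * (2 * int n + 2 * j + (k + 1) - 7)
      = k * (2 * int n + 2 * j + k - 7) + 2 * (int n + j + k - 3)" by (simp add: algebra_simps)
  then show ?thesis unfolding uexp_def by (simp only: add_double_div_2; simp add: algebra_simps)
qed
lemma uexp_k_succ_j_pred2: "uexp n (k + 1) (j - 2) = uexp n k j + (j - int n - k + 1)"
proof -
  have "(k + 1) * (2 * int n + 2 * (j - 2) + (k + 1) - 7)
      = k * (2 * int n + 2 * j + k - 7) + 2 * (int n + j - 5 - k)" by (simp add: algebra_simps)
  then show ?thesis unfolding uexp_def by (simp only: add_double_div_2; simp add: algebra_simps)
qed

lemma uprefactor_j_pred: "uprefactor n k (j - 1)
    = uprefactor n k j * ((-1) * q^3 / (q powi int n * q powi k) * \<kappa>^2)"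
proof -
  have a: "(-1::complex) powi (j - 1) = (-1) powi j * (-1)"
    using power_int_diff[of "-1::complex" j 1] by simp
  have b: "q powi (uexp n k (j - 1)) = q powi (uexp n k j) * q powi (3 - int n - k)"
    by (rule power_int_add_split[OF q_nonzero uexp_j_pred])
  have b2: "q powi (3 - int n - k) = q ^ 3 / (q powi int n * q powi k)"
    using q_nonzero by (simp add: power_int_diff power_int_numeral)
  have c: "\<kappa> powi (- (2 * (j - 1) + k)) = \<kappa> powi (- (2 * j + k)) * \<kappa> powi 2"
    by (rule power_int_add_split[OF \<kappa>_nonzero]) simp
  show ?thesis unfolding uprefactor_def a b b2 c by (simp add: algebra_simps)
qed

lemma uprefactor_k_pred: "uprefactor n (k - 1) j
    = uprefactor n k j * (q^4 / (q powi int n * q powi j * q powi k) * \<kappa> / (\<alpha> * Pq))"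
proof -
  have b: "q powi (uexp n (k - 1) j) = q powi (uexp n k j) * q powi (4 - int n - j - k)"
    by (rule power_int_add_split[OF q_nonzero uexp_k_pred])
  have b2: "q powi (4 - int n - j - k) = q ^ 4 / (q powi int n * q powi j * q powi k)"
    using q_nonzero by (simp add: power_int_diff power_int_numeral)
  have c: "\<kappa> powi (- (2 * j + (k - 1))) = \<kappa> powi (- (2 * j + k)) * \<kappa> powi 1"
    by (rule power_int_add_split[OF \<kappa>_nonzero]) simp
  show ?thesis unfolding uprefactor_def b b2 c
      power_int_diff_1[OF \<alpha>_nonzero] power_int_diff_1[OF Pq_nonzero]
    using \<alpha>_nonzero Pq_nonzero by (simp add: field_simps)
qed

lemma uprefactor_k_succ_j_pred: "uprefactor n (k + 1) (j - 1)
    = uprefactor n k j * ((-1) * \<alpha> * Pq * q powi j / q * \<kappa>)"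
proof -
  have a: "(-1::complex) powi (j - 1) = (-1) powi j * (-1)"
    using power_int_diff[of "-1::complex" j 1] by simp
  have b: "q powi (uexp n (k + 1) (j - 1)) = q powi (uexp n k j) * q powi (j - 1)"
    by (rule power_int_add_split[OF q_nonzero uexp_k_succ_j_pred])
  have c: "\<kappa> powi (- (2 * (j - 1) + (k + 1))) = \<kappa> powi (- (2 * j + k)) * \<kappa>"
    using power_int_add_1_nonzero[OF \<kappa>_nonzero, of "- (2 * j + k)"] by (simp add: algebra_simps)
  show ?thesis unfolding uprefactor_def a b c
      power_int_diff_1[OF q_nonzero] power_int_add_1_nonzero[OF \<alpha>_nonzero]
      power_int_add_1_nonzero[OF Pq_nonzero]
    using q_nonzero by (simp add: field_simps)
qed

lemma uprefactor_k_succ: "uprefactor n (k + 1) j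
    = uprefactor n k j * (\<alpha> * Pq * q powi int n * q powi j * q powi k / (q^3 * \<kappa>))"
proof -
  have b: "q powi (uexp n (k + 1) j) = q powi (uexp n k j) * q powi (int n + j + k - 3)"
    by (rule power_int_add_split[OF q_nonzero uexp_k_succ])
  have b2: "q powi (int n + j + k - 3) = q powi int n * q powi j * q powi k / q ^ 3"
    using q_nonzero by (simp add: power_int_diff power_int_add power_int_numeral)
  have c: "\<kappa> powi (- (2 * j + (k + 1))) = \<kappa> powi (- (2 * j + k)) * \<kappa> powi (-1)"
    by (rule power_int_add_split[OF \<kappa>_nonzero]) simp
  show ?thesis unfolding uprefactor_def b b2 c
      power_int_add_1_nonzero[OF \<alpha>_nonzero] power_int_add_1_nonzero[OF Pq_nonzero]
    using q_nonzero \<kappa>_nonzero by (simp add: field_simps)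
qed

lemma uprefactor_k_succ_j_pred2: "uprefactor n (k + 1) (j - 2)
    = uprefactor n k j * (\<alpha> * Pq * q * q powi j / (q powi int n * q powi k) * \<kappa>^3)"
proof -
  have a: "(-1::complex) powi (j - 2) = (-1) powi j"
    using power_int_diff[of "-1::complex" j 2] by simp
  have b: "q powi (uexp n (k + 1) (j - 2)) = q powi (uexp n k j) * q powi (j - int n - k + 1)"
    by (rule power_int_add_split[OF q_nonzero uexp_k_succ_j_pred2])
  have b2: "q powi (j - int n - k + 1) = q * q powi j / (q powi int n * q powi k)"
    using q_nonzero by (simp add: power_int_diff power_int_add)
  have c: "\<kappa> powi (- (2 * (j - 2) + (k + 1))) = \<kappa> powi (- (2 * j + k)) * \<kappa> powi 3"
    by (rule power_int_add_split[OF \<kappa>_nonzero]) simp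
  show ?thesis unfolding uprefactor_def a b b2 c
      power_int_add_1_nonzero[OF \<alpha>_nonzero] power_int_add_1_nonzero[OF Pq_nonzero]
    using q_nonzero \<kappa>_nonzero
    by (simp add: field_simps power_int_numeral)
qed

lemma qbinom_mult_qbinom: "k' + j' \<le> n \<Longrightarrow> qbinom q n k' * qbinom q (n - k') j'
    = qmultinom n k' j' (n - k' - j')"
  unfolding qbinom_def qmultinom_def using qfact_nonzero by (simp add: field_simps)

lemma ucoef_factor: "ucoef n k j = uprefactor n k j * qtrinom n k j"
proof (cases "0 \<le> k \<and> 0 \<le> j \<and> k + j \<le> int n")
  case True
  then obtain k' j' where kj: "k = int k'" "j = int j'" by (metis nonneg_int_cases)
  then have le: "k' + j' \<le> n" using True by simp
  have e1: "nat (int n - int k' - int j') = n - k' - j'" using le by simp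
  have e2: "q powi (uexp n (int k') (int j'))
      = q powi (int j' * (int n - 3)) * q powi ((int k' * (2 * int n + 2 * int j' + int k' - 7)) div 2)"
    unfolding uexp_def using q_nonzero by (simp add: power_int_add)
  have e3: "\<kappa> powi (- (2 * int j' + int k')) = inverse \<kappa> ^ (2 * j' + k')"
  proof -
    have "- (2 * int j' + int k') = - int (2 * j' + k')" by simp
    then show ?thesis by (simp only: power_int_minus power_int_of_nat power_inverse)
  qed
  have e4: "(-1::complex) powi int j' = (-1) ^ j'" "\<alpha> powi int k' = \<alpha> ^ k'"
      "Pq powi int k' = (q^2 - 1) ^ k'"
    by (simp_all add: Pq_def)
  have P: "uprefactor n k j
      = (-1) ^ j' * \<alpha> ^ k' * (q^2 - 1) ^ k'
          * (q powi (int j' * (int n - 3))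
              * q powi ((int k' * (2 * int n + 2 * int j' + int k' - 7)) div 2))
                  * inverse \<kappa> ^ (2 * j' + k')"
    unfolding uprefactor_def kj e2 e3 e4 by (rule refl)
  have T: "qtrinom n k j = qmultinom n k' j' (n - k' - j')" unfolding qtrinom_def kj using le
    by (simp add: e1)
  have A: "ucoef n k j = acoef q \<alpha> n k' j' * inverse \<kappa> ^ (2 * j' + k')"
    unfolding ucoef_def kj using le by (simp add: nat_mult_distrib nat_add_distrib)
  show ?thesis unfolding A P T acoef_def qbinom_mult_qbinom[OF le, symmetric]
    by (simp add: mult.assoc mult.left_commute)
next
  case False
  have "ucoef n k j = 0" unfolding ucoef_def by (rule if_not_P[OF False])
  moreover have "qtrinom n k j = 0" unfolding qtrinom_def by (rule if_not_P[OF False])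
  ultimately show ?thesis by simp
qed

lemma qint_int_qbracket: "qint_int q m = qbracket q Pq (q powi m)"
proof -
  have "q - inverse q = Pq / q" using q_nonzero by (simp add: Pq_def field_simps power2_eq_square)
  then show ?thesis unfolding qint_int_def qbracket_def using q_nonzero Pq_nonzero
    by (simp add: power_int_minus field_simps)
qed

lemma q_powi_add: "q powi (a + b) = q powi a * q powi b" using q_nonzero by (simp add: power_int_add)
lemma q_powi_diff: "q powi (a - b) = q powi a / q powi b" using q_nonzero by (simp add: power_int_diff)
lemma q_powi_double: "q powi (2 * a) = (q powi a) ^ 2"
  by (simp add: power_int_mult power_int_power mult.commute[of 2 a])
lemma q_powi_nonzero: "q powi a \<noteq> 0" using q_nonzero by simp

lemma inverse_qdiff2: "1 / qdiff2 = q^2 / Pq^2"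
  using q_nonzero unfolding Pq_def by (simp add: field_simps power2_eq_square)

lemma c_critical: "hfun q n \<kappa> c = 0 \<Longrightarrow>
   c = (q^3 * \<kappa> / (q powi int n)^2 + (q powi int n)^2 / (q^3 * \<kappa>)) * (q^2 / Pq^2)"
proof -
  assume h: "hfun q n \<kappa> c = 0"
  have "(q - inverse q)^2 * c = q powi (3 - 2 * int n) * \<kappa> + q powi (2 * int n - 3) * inverse \<kappa>"
    using h unfolding hfun_def by simp
  moreover have "q powi (3 - 2 * int n) = q^3 / (q powi int n)^2"
      "q powi (2 * int n - 3) = (q powi int n)^2 / q^3"
    by (simp_all only: q_powi_diff q_powi_double power_int_numeral)
  ultimately have "c = (q^3 / (q powi int n)^2 * \<kappa> + (q powi int n)^2 / q^3 * inverse \<kappa>) * (1 / qdiff2)"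
    using qdiff2_nonzero by (simp add: field_simps)
  then show ?thesis unfolding inverse_qdiff2 by (simp add: field_simps)
qed

lemma c_eps_eq: "c_eps q \<kappa> n = (q powi int n / (q^3 * \<kappa>) + q^3 * \<kappa> / q powi int n) * (q^2 / Pq^2)"
proof -
  have "q powi (int n - 3) = q powi int n / q^3" "q powi (3 - int n) = q^3 / q powi int n"
    by (simp_all only: q_powi_diff power_int_numeral)
  then have "c_eps q \<kappa> n = (q powi int n / q^3 * inverse \<kappa> + q^3 / q powi int n * \<kappa>) * (1 / qdiff2)"
    unfolding c_eps_def  by (simp add: field_simps)
  then show ?thesis unfolding inverse_qdiff2 by (simp add: field_simps)
qed

lemma qdiff2_eq: "qdiff2 = Pq^2 / q^2"
  using q_nonzero unfolding Pq_def by (simp add: field_simps power2_eq_square)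

lemmas q_powi_simps = q_powi_add q_powi_diff q_powi_double power_int_numeral power_int_1_right power_int_of_nat

lemma qint_int_k_succ: "qint_int q (k + 1) = qbracket q Pq (q * q powi k)"
  unfolding qint_int_qbracket by (simp only: q_powi_simps mult.commute)
lemma qint_int_rest_succ: "qint_int q (int n - k - j + 1)
    = qbracket q Pq (q * q ^ n / (q powi k * q powi j))"
  unfolding qint_int_qbracket using q_powi_nonzero[of k] q_powi_nonzero[of j]
    by (simp only: q_powi_simps) (simp add: field_simps)
lemma qint_int_rest: "qint_int q (int n - k - j) = qbracket q Pq (q ^ n / (q powi k * q powi j))"
  unfolding qint_int_qbracket using q_powi_nonzero[of k] q_powi_nonzero[of j]
    by (simp only: q_powi_simps) (simp add: field_simps)
lemma qint_int_j_pred: "qint_int q (j - 1) = qbracket q Pq (q powi j / q)"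
  unfolding qint_int_qbracket by (simp only: q_powi_simps)
lemma qint_int_n_k_succ: "qint_int q (int n - k + 1) = qbracket q Pq (q * q ^ n / q powi k)"
  unfolding qint_int_qbracket using q_powi_nonzero[of k]
    by (simp only: q_powi_simps) (simp add: field_simps)
lemma qint_int_n_k_pred: "qint_int q (int n - (k - 1)) = qbracket q Pq (q * q ^ n / q powi k)"
  unfolding qint_int_qbracket using q_powi_nonzero[of k] q_nonzero
    by (simp only: q_powi_simps) (simp add: field_simps)

lemma gam1_at: "gam1 n k j = q ^ n / (q powi k)^2 * c"
  unfolding C1_coef1_def using q_powi_nonzero[of k]
    by (simp only: q_powi_simps) (simp add: field_simps power2_eq_square)

lemma gam2_at: "gam2 n k (j - 1)
    = inverse \<kappa> * (((q powi k)^2 / (q ^ n * q) - q ^ n / ((q powi k)^2 * q)) * (q^2 / Pq^2)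
    + qbracket q Pq (q powi k) * qbracket q Pq (q * q ^ n / q powi k))"
proof -
  have e1: "q powi (k - (int n - k) - 1) = (q powi k)^2 / (q ^ n * q)"
    using q_powi_nonzero[of k] q_power_nonzero q_nonzero
      by (simp only: q_powi_simps) (simp add: field_simps power2_eq_square)
  have e2: "q powi (int n - k - k - 1) = q ^ n / ((q powi k)^2 * q)"
    using q_powi_nonzero[of k] q_power_nonzero q_nonzero
      by (simp only: q_powi_simps) (simp add: field_simps power2_eq_square)
  show ?thesis unfolding C1_coef2_def e1 e2 qint_int_n_k_succ using inverse_qdiff2
    by (simp add: divide_inverse qint_int_qbracket)
qed

lemma gam3_at: "gam3 n (k - 1) j = \<alpha> * (q powi j)^2 * qbracket q Pq (q * q ^ n / q powi k)"
  unfolding C1_coef3_def qint_int_n_k_pred by (simp only: q_powi_double)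

lemma gam4_at: "gam4 n (k + 1) (j - 1)
    = qbracket q Pq (q * q powi k) * (q ^ n / ((q powi k)^2 * (q powi j)^2)) * c / (\<alpha> * \<kappa>)"
proof -
  have e: "q powi (int n - (k + 1) - (k + 1) - 2 * (j - 1)) = q ^ n / ((q powi k)^2 * (q powi j)^2)"
    using q_powi_nonzero[of k] q_powi_nonzero[of j] q_power_nonzero q_nonzero
      by (simp only: q_powi_simps) (simp add: field_simps power2_eq_square)
  show ?thesis unfolding C1_coef4_def e qint_int_k_succ ..
qed

lemma gam5_at: "gam5 n (k + 1) j
    = qbracket q Pq (q * q powi k) * (q ^ n / (q * (q powi k)^2 * (q powi j)^2)) * (q^2 / Pq^2) / \<alpha>"
proof -
  have e: "q powi (int n - (k + 1) - (k + 1) - 2 * j + 1) = q ^ n / (q * (q powi k)^2 * (q powi j)^2)"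
    using q_powi_nonzero[of k] q_powi_nonzero[of j] q_power_nonzero q_nonzero
      by (simp only: q_powi_simps) (simp add: field_simps power2_eq_square)
  show ?thesis unfolding C1_coef5_def e qint_int_k_succ qdiff2_eq using Pq_nonzero q_nonzero \<alpha>_nonzero
    by (simp add: field_simps)
qed

lemma gam6_at: "gam6 n (k + 1) (j - 2)
    = qbracket q Pq (q * q powi k) * (q * q ^ n / ((q powi k)^2 * (q powi j)^2))
        * (q^2 / Pq^2) / (\<alpha> * \<kappa>^2)"
proof -
  have e: "q powi (int n - (k + 1) - (k + 1) - 2 * (j - 2) - 1)
      = q * q ^ n / ((q powi k)^2 * (q powi j)^2)"
    using q_powi_nonzero[of k] q_powi_nonzero[of j] q_power_nonzero q_nonzero
      by (simp only: q_powi_simps) (simp add: field_simps power2_eq_square)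
  show ?thesis unfolding C1_coef6_def e qint_int_k_succ qdiff2_eq
    using Pq_nonzero q_nonzero \<alpha>_nonzero \<kappa>_nonzero by (simp add: field_simps)
qed

lemma ucoef_gam_factored:
  assumes R: "-1 \<le> k" "0 \<le> j" "k + j \<le> int n + 1"
  defines "X \<equiv> q powi k" and "Y \<equiv> q powi j" and "Z \<equiv> q ^ n"
    and "P \<equiv> uprefactor n k j * qtrinom_base n k j"
  shows "ucoef n k j * gam1 n k j
      = P * ((Z / X^2 * c) * 1 * (qbracket q Pq (q*X) * qbracket q Pq (q*Z/(X*Y))))" (is ?t1)
    and "ucoef n k (j - 1) * gam2 n k (j - 1)
      = P * ((inverse \<kappa> * ((X^2/(Z*q) - Z/(X^2*q)) * (q^2 / Pq^2) + qbracket q Pq X * qbracket q Pq (q*Z/X)))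
          * ((-1) * q^3/(Z*X) * \<kappa>^2) * (qbracket q Pq (q*X) * qbracket q Pq Y))" (is ?t2)
    and "ucoef n (k - 1) j * gam3 n (k - 1) j
      = P * ((\<alpha> * Y^2 * qbracket q Pq (q*Z/X)) * (q^4/(Z*Y*X) * \<kappa> / (\<alpha> * Pq))
          * (qbracket q Pq X * qbracket q Pq (q*X)))" (is ?t3)
    and "ucoef n (k + 1) (j - 1) * gam4 n (k + 1) (j - 1)
      = P * ((qbracket q Pq (q*X) * (Z/(X^2*Y^2)) * c / (\<alpha>*\<kappa>)) * ((-1) * \<alpha> * Pq * Y / q * \<kappa>)
          * (qbracket q Pq Y * qbracket q Pq (q*Z/(X*Y))))" (is ?t4)
    and "ucoef n (k + 1) j * gam5 n (k + 1) j
      = P * ((qbracket q Pq (q*X) * (Z/(q*X^2*Y^2)) * (q^2 / Pq^2) / \<alpha>) * (\<alpha>*Pq*Z*Y*X/(q^3*\<kappa>))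
          * (qbracket q Pq (q*Z/(X*Y)) * qbracket q Pq (Z/(X*Y))))" (is ?t5)
    and "ucoef n (k + 1) (j - 2) * gam6 n (k + 1) (j - 2)
      = P * ((qbracket q Pq (q*X) * (q*Z/(X^2*Y^2)) * (q^2 / Pq^2) / (\<alpha>*\<kappa>^2))
          * (\<alpha>*Pq*q*Y/(Z*X)*\<kappa>^3) * (qbracket q Pq Y * qbracket q Pq (Y/q)))" (is ?t6)
    and "c_eps q \<kappa> n * ucoef n k j
      = P * (c_eps q \<kappa> n * (qbracket q Pq (q*X) * qbracket q Pq (q*Z/(X*Y))))" (is ?t0)
proof -
  have n: "q powi int n = q ^ n" by simp
  note defs = X_def Y_def Z_def P_def ucoef_factor
  note normalize = mult_1_right mult_1_left mult.assoc mult.commute mult.left_commute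
  \<comment> \<open>\<open>qint_int_k_succ\<close> would also rewrite \<open>qint_int q (int n - k - j + 1)\<close>, hence it comes last\<close>
  show ?t1
    unfolding defs qtrinom_same[OF R] gam1_at qint_int_rest_succ unfolding qint_int_k_succ
    by (simp only: normalize)
  show ?t2
    unfolding defs qtrinom_j_pred[OF R] gam2_at qint_int_k_succ uprefactor_j_pred n qint_int_qbracket[of j]
    by (simp only: normalize)
  show ?t3
    unfolding defs qtrinom_k_pred[OF R] gam3_at qint_int_k_succ uprefactor_k_pred n qint_int_qbracket[of k]
    by (simp only: normalize)
  show ?t4
    unfolding defs qtrinom_k_succ_j_pred[OF R] gam4_at qint_int_rest_succ uprefactor_k_succ_j_pred n
      qint_int_qbracket[of j]
    by (simp only: normalize)
  show ?t5
    unfolding defs qtrinom_k_succ[OF R] gam5_at qint_int_rest_succ qint_int_rest uprefactor_k_succ n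
    by (simp only: normalize)
  show ?t6
    unfolding defs qtrinom_k_succ_j_pred2[OF R] gam6_at qint_int_j_pred uprefactor_k_succ_j_pred2 n
      qint_int_qbracket[of j]
    by (simp only: normalize)
  show ?t0
    unfolding defs qtrinom_same[OF R] qint_int_rest_succ unfolding qint_int_k_succ
    by (simp only: normalize)
qed

lemma ucoef_recurrence:
  assumes h: "hfun q n \<kappa> c = 0"
  shows "ucoef n k j * gam1 n k j + ucoef n k (j - 1) * gam2 n k (j - 1) + ucoef n (k - 1) j * gam3 n (k - 1) j
      + ucoef n (k + 1) (j - 1) * gam4 n (k + 1) (j - 1) - ucoef n (k + 1) j * gam5 n (k + 1) j
      - ucoef n (k + 1) (j - 2) * gam6 n (k + 1) (j - 2) = c_eps q \<kappa> n * ucoef n k j"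
proof (cases "-1 \<le> k \<and> 0 \<le> j \<and> k + j \<le> int n + 1")
  case False
  then have "ucoef n k j = 0" "ucoef n k (j - 1) = 0" "ucoef n (k - 1) j = 0" "ucoef n (k + 1) (j - 1) = 0"
     "ucoef n (k + 1) j = 0" "ucoef n (k + 1) (j - 2) = 0"
    by (auto intro!: ucoef_outside)
  then show ?thesis by simp
next
  case True
  then have R: "-1 \<le> k" "0 \<le> j" "k + j \<le> int n + 1" by auto
  have c: "c = (q^3 * \<kappa> / (q ^ n)^2 + (q ^ n)^2 / (q^3 * \<kappa>)) * (q^2 / Pq^2)"
    using c_critical[OF h] by simp
  have c_eps: "c_eps q \<kappa> n = (q ^ n / (q^3 * \<kappa>) + q^3 * \<kappa> / q ^ n) * (q^2 / Pq^2)"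
    using c_eps_eq[of n] by simp
  note identity = ucoef_recurrence_identity[OF q_nonzero Pq_nonzero q_powi_nonzero[of k] q_powi_nonzero[of j]
      q_power_nonzero[of n] \<kappa>_nonzero \<alpha>_nonzero c c_eps]
  show ?thesis
    unfolding ucoef_gam_factored[OF R] identity[symmetric] by (simp only: distrib_left right_diff_distrib)
qed

end

section \<open>The vector \<open>u(n,0,1)\<close> as a sum over a box\<close>

context quotient_module
begin

definition uterm :: "nat \<Rightarrow> int \<Rightarrow> int \<Rightarrow> fa" where
  "uterm n k j = fmon q (nat (int n - k)) (nat k) (nat (2 * j))"

text \<open>\<open>ucoef n\<close> is supported in \<open>{0..n}\<^sup>2\<close> and \<open>C\<^sub>1\<close> shifts the indices by at most 2, so all
  sums can be taken over one fixed box.\<close>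

definition ubox :: "nat \<Rightarrow> (int \<times> int) set" where
  "ubox n = {-3 .. int n + 3} \<times> {-3 .. int n + 3}"

definition usum :: "nat \<Rightarrow> fa" where
  "usum n = (\<Sum>(k, j) \<in> ubox n. sc (ucoef n k j) * uterm n k j)"

lemma u01_eq_fmon_sum:
  "veq (u01 q \<alpha> n)
     (\<Sum>k\<in>{0..n}. \<Sum>j\<in>{0..n-k}. sc (acoef q \<alpha> n k j * inverse \<kappa> ^ (2 * j + k)) * fmon q (n - k) k (2 * j))"
  unfolding u01_def
proof (intro eqV_sum)
  fix k j
  have "sc (acoef q \<alpha> n k j) * F2 ^ (n - k) * F3 q ^ k * K2 ^ (2 * j) * Kinv ^ (2 * j + k)
     = sc (acoef q \<alpha> n k j) * (fmon q (n - k) k (2 * j) * Kinv ^ (2 * j + k))"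
    by (simp add: fmon_def mult.assoc)
  also have "veq \<dots> (sc (acoef q \<alpha> n k j) * (sc (inverse \<kappa> ^ (2 * j + k)) * fmon q (n - k) k (2 * j)))"
    by (intro eqV_mult_left veq_mult_Kinv_power)
  also have "\<dots> = sc (acoef q \<alpha> n k j * inverse \<kappa> ^ (2 * j + k)) * fmon q (n - k) k (2 * j)"
    by (simp add: sc_mult_assoc)
  finally show "veq (sc (acoef q \<alpha> n k j) * F2 ^ (n - k) * F3 q ^ k * K2 ^ (2 * j) * Kinv ^ (2 * j + k))
     (sc (acoef q \<alpha> n k j * inverse \<kappa> ^ (2 * j + k)) * fmon q (n - k) k (2 * j))" .
qed

lemma fmon_sum_eq_usum:
  "(\<Sum>k\<in>{0..n}. \<Sum>j\<in>{0..n-k}. sc (acoef q \<alpha> n k j * inverse \<kappa> ^ (2 * j + k)) * fmon q (n - k) k (2 * j))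
     = usum n"
proof -
  let ?T = "Sigma {0..n} (\<lambda>k. {0..n - k})" and ?emb = "\<lambda>(k :: nat, j :: nat). (int k, int j)"
  have "(\<Sum>k\<in>{0..n}. \<Sum>j\<in>{0..n-k}. sc (acoef q \<alpha> n k j * inverse \<kappa> ^ (2 * j + k))
      * fmon q (n - k) k (2 * j))
      = (\<Sum>(k, j)\<in>?T. sc (acoef q \<alpha> n k j * inverse \<kappa> ^ (2 * j + k)) * fmon q (n - k) k (2 * j))"
    by (rule sum.Sigma) auto
  also have "\<dots> = (\<Sum>(k, j)\<in>?T. sc (ucoef n (int k) (int j)) * uterm n (int k) (int j))"
  proof (rule sum.cong[OF refl], clarify)
    fix k j assume "k \<in> {0..n}" "j \<in> {0..n - k}"
    then have "int k + int j \<le> int n" "nat (int n - int k) = n - k"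
      by auto
    then show "sc (acoef q \<alpha> n k j * inverse \<kappa> ^ (2 * j + k)) * fmon q (n - k) k (2 * j)
        = sc (ucoef n (int k) (int j)) * uterm n (int k) (int j)"
      by (simp add: ucoef_def uterm_def nat_mult_distrib nat_add_distrib)
  qed
  also have "\<dots> = (\<Sum>(k, j)\<in>?emb ` ?T. sc (ucoef n k j) * uterm n k j)"
    by (subst sum.reindex) (auto simp: inj_on_def intro!: sum.cong)
  also have "\<dots> = usum n"
    unfolding usum_def
  proof (rule sum.mono_neutral_left)
    show "?emb ` ?T \<subseteq> ubox n"
      by (auto simp: ubox_def)
    show "\<forall>x\<in>ubox n - ?emb ` ?T. (case x of (k, j) \<Rightarrow> sc (ucoef n k j) * uterm n k j) = 0"
    proof (clarify)
      fix k j assume "(k, j) \<notin> ?emb ` ?T"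
      moreover have "(k, j) \<in> ?emb ` ?T" if "0 \<le> k" "0 \<le> j" "k + j \<le> int n"
        by (rule rev_image_eqI[of "(nat k, nat j)"]) (use that in auto)
      ultimately have "\<not> (0 \<le> k \<and> 0 \<le> j \<and> k + j \<le> int n)"
        by blast
      then show "sc (ucoef n k j) * uterm n k j = 0" by (simp add: ucoef_outside)
    qed
  qed (simp add: ubox_def)
  finally show ?thesis .
qed

lemma u01_eq_usum: "veq (u01 q \<alpha> n) (usum n)"
  using u01_eq_fmon_sum fmon_sum_eq_usum by simp

lemma Kel_usum: "veq (Kel * usum n) (sc (inverse q ^ (3 * n) * \<kappa>) * usum n)"
proof -
  have "Kel * usum n = (\<Sum>(k, j) \<in> ubox n. sc (ucoef n k j) * (Kel * uterm n k j))"
    unfolding usum_def by (simp add: sum_distrib_left case_prod_unfold sc_left_commute[of Kel])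
  also have "veq \<dots> (\<Sum>(k, j) \<in> ubox n. sc (ucoef n k j) * (sc (inverse q ^ (3 * n) * \<kappa>) * uterm n k j))"
  proof (intro eqV_sum)
    fix x assume "x \<in> ubox n"
    obtain k j where kj: "x = (k, j)" by force
    show "veq (case x of (k, j) \<Rightarrow> sc (ucoef n k j) * (Kel * uterm n k j))
             (case x of (k, j) \<Rightarrow> sc (ucoef n k j) * (sc (inverse q ^ (3 * n) * \<kappa>) * uterm n k j))"
    proof (cases "0 \<le> k \<and> 0 \<le> j \<and> k + j \<le> int n")
      case True
      then have "nat (int n - k) + nat k = n" by linarith
      then have "veq (Kel * uterm n k j) (sc (inverse q ^ (3 * n) * \<kappa>) * uterm n k j)"
        unfolding uterm_def using Kel_fmon[of "nat (int n - k)" "nat k" "nat (2 * j)"] by simp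
      then show ?thesis using kj by (simp add: eqV_mult_left)
    next
      case False
      then have "ucoef n k j = 0" by (rule ucoef_outside)
      then show ?thesis using kj by simp
    qed
  qed
  also have "\<dots> = sc (inverse q ^ (3 * n) * \<kappa>) * usum n"
    unfolding usum_def by (simp add: sum_distrib_left case_prod_unfold sc_mult_assoc mult.commute)
  finally show ?thesis .
qed

lemma Kel_u01: "veq (Kel * u01 q \<alpha> n) (sc (kappa_eps q \<kappa> n) * u01 q \<alpha> n)"
proof -
  have "veq (Kel * u01 q \<alpha> n) (Kel * usum n)" by (intro eqV_mult_left u01_eq_usum)
  also have "veq \<dots> (sc (inverse q ^ (3 * n) * \<kappa>) * usum n)" by (rule Kel_usum)
  also have "veq \<dots> (sc (inverse q ^ (3 * n) * \<kappa>) * u01 q \<alpha> n)"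
    by (rule eqV_mult_left[OF eqV_sym[OF u01_eq_usum]])
  also have "inverse q ^ (3 * n) * \<kappa> = kappa_eps q \<kappa> n"
  proof -
    have "- 3 * int n = - int (3 * n)" by simp
    then have "q powi (- 3 * int n) = inverse (q ^ (3 * n))"
      by (simp only: power_int_minus power_int_of_nat)
    then show ?thesis by (simp add: kappa_eps_def power_inverse)
  qed
  finally show ?thesis .
qed

end

context generic_quotient_module
begin

lemma ucoef_support: "ucoef n k j \<noteq> 0 \<Longrightarrow> 0 \<le> k \<and> k \<le> int n \<and> 0 \<le> j \<and> j \<le> int n"
  by (cases "0 \<le> k \<and> 0 \<le> j \<and> k + j \<le> int n") (auto simp: ucoef_def)

lemma C1_uterm:
  assumes "0 \<le> k" "k \<le> int n" "0 \<le> j"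
  shows "veq (C1 q * uterm n k j)
    (sc (gam1 n k j) * uterm n k j + sc (gam2 n k j) * uterm n k (j + 1)
        + sc (gam3 n k j) * uterm n (k + 1) j
     + sc (gam4 n k j) * uterm n (k - 1) (j + 1) - sc (gam5 n k j) * uterm n (k - 1) j
         - sc (gam6 n k j) * uterm n (k - 1) (j + 2))"
proof -
  have i: "int (nat (int n - k)) = int n - k" "int (nat k) = k" "int (nat (2 * j)) = 2 * j"
    using assms by auto
  have w: "fmon q (nat (int n - k)) (nat k) (nat (2 * j) + 2) = uterm n k (j + 1)"
    "fmon q (nat (int n - k) - 1) (nat k + 1) (nat (2 * j)) = uterm n (k + 1) j"
    "fmon q (nat (int n - k) + 1) (nat k - 1) (nat (2 * j) + 2) = uterm n (k - 1) (j + 1)"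
    "fmon q (nat (int n - k) + 1) (nat k - 1) (nat (2 * j)) = uterm n (k - 1) j"
    "fmon q (nat (int n - k) + 1) (nat k - 1) (nat (2 * j) + 4) = uterm n (k - 1) (j + 2)"
    unfolding uterm_def using assms by (auto intro!: arg_cong3[where f="fmon q"])
  show ?thesis using C1_fmon[of "nat (int n - k)" "nat k" "nat (2 * j)"] unfolding i w
    by (simp add: uterm_def)
qed

lemma sum_ubox_shift:
  fixes F :: "int \<Rightarrow> int \<Rightarrow> complex" and W :: "int \<Rightarrow> int \<Rightarrow> fa"
  assumes supp: "\<And>k j. F k j \<noteq> 0 \<Longrightarrow> 0 \<le> k \<and> k \<le> int n \<and> 0 \<le> j \<and> j \<le> int n"
    and d: "\<bar>dk\<bar> \<le> 2" "\<bar>dj\<bar> \<le> 2"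
  shows "(\<Sum>(k, j)\<in>ubox n. sc (F k j) * W (k + dk) (j + dj))
      = (\<Sum>(k, j)\<in>ubox n. sc (F (k - dk) (j - dj)) * W k j)"
proof -
  define S where "S = {0 .. int n} \<times> {0 .. int n}"
  have SB: "S \<subseteq> ubox n" by (auto simp: S_def ubox_def)
  have fB: "finite (ubox n)" by (simp add: ubox_def)
  have "(\<Sum>(k, j)\<in>ubox n. sc (F k j) * W (k + dk) (j + dj))
      = (\<Sum>(k, j)\<in>S. sc (F k j) * W (k + dk) (j + dj))"
  proof (rule sum.mono_neutral_right[OF fB SB], intro ballI)
    fix i assume i: "i \<in> ubox n - S"
    obtain k j where kj: "i = (k, j)" by force
    have "F k j = 0" using i kj supp[of k j] by (auto simp: S_def)
    then show "(case i of (k, j) \<Rightarrow> sc (F k j) * W (k + dk) (j + dj)) = 0" using kj by simp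
  qed
  also have "\<dots> = (\<Sum>(k, j)\<in>(\<lambda>(k, j). (k + dk, j + dj)) ` S. sc (F (k - dk) (j - dj)) * W k j)"
    by (subst sum.reindex) (auto simp: inj_on_def intro!: sum.cong)
  also have "\<dots> = (\<Sum>(k, j)\<in>ubox n. sc (F (k - dk) (j - dj)) * W k j)"
  proof (rule sum.mono_neutral_left[OF fB])
    show "(\<lambda>(k, j). (k + dk, j + dj)) ` S \<subseteq> ubox n" using d by (auto simp: S_def ubox_def)
    show "\<forall>i\<in>ubox n - (\<lambda>(k, j). (k + dk, j + dj)) ` S. (case i of (k, j) \<Rightarrow> sc (F (k - dk) (j - dj))
        * W k j) = 0"
    proof
      fix i assume i: "i \<in> ubox n - (\<lambda>(k, j). (k + dk, j + dj)) ` S"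
      obtain k j where kj: "i = (k, j)" by force
      have "(k - dk, j - dj) \<notin> S"
      proof
        assume "(k - dk, j - dj) \<in> S"
        then have "i \<in> (\<lambda>(k, j). (k + dk, j + dj)) ` S" using kj
          by (auto intro: image_eqI[where x="(k - dk, j - dj)"])
        then show False using i by blast
      qed
      then have "F (k - dk) (j - dj) = 0" using supp[of "k - dk" "j - dj"] by (auto simp: S_def)
      then show "(case i of (k, j) \<Rightarrow> sc (F (k - dk) (j - dj)) * W k j) = 0" using kj by simp
    qed
  qed
  finally show ?thesis .
qed

lemma C1_usum_expand:
  "veq (C1 q * usum n) (\<Sum>(k, j)\<in>ubox n. sc (ucoef n k j) *
     (sc (gam1 n k j) * uterm n k j + sc (gam2 n k j) * uterm n k (j + 1)
         + sc (gam3 n k j) * uterm n (k + 1) j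
      + sc (gam4 n k j) * uterm n (k - 1) (j + 1) - sc (gam5 n k j) * uterm n (k - 1) j
      - sc (gam6 n k j) * uterm n (k - 1) (j + 2)))"
proof -
  have "C1 q * usum n = (\<Sum>(k, j)\<in>ubox n. sc (ucoef n k j) * (C1 q * uterm n k j))"
    unfolding usum_def by (simp add: sum_distrib_left case_prod_unfold sc_left_commute[of "C1 q"])
  moreover have "veq (sc (ucoef n k j) * (C1 q * uterm n k j)) (sc (ucoef n k j) *
     (sc (gam1 n k j) * uterm n k j + sc (gam2 n k j) * uterm n k (j + 1)
         + sc (gam3 n k j) * uterm n (k + 1) j
      + sc (gam4 n k j) * uterm n (k - 1) (j + 1) - sc (gam5 n k j) * uterm n (k - 1) j
      - sc (gam6 n k j) * uterm n (k - 1) (j + 2)))" for k j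
  proof (cases "ucoef n k j = 0")
    case False
    then have "0 \<le> k" "k \<le> int n" "0 \<le> j"
      using ucoef_support by blast+
    then show ?thesis by (rule eqV_mult_left[OF C1_uterm])
  qed simp
  ultimately show ?thesis
    by (simp add: eqV_sum case_prod_unfold)
qed

lemma C1_usum_collect:
  "(\<Sum>(k, j)\<in>ubox n. sc (ucoef n k j) *
     (sc (gam1 n k j) * uterm n k j + sc (gam2 n k j) * uterm n k (j + 1)
         + sc (gam3 n k j) * uterm n (k + 1) j
      + sc (gam4 n k j) * uterm n (k - 1) (j + 1) - sc (gam5 n k j) * uterm n (k - 1) j
      - sc (gam6 n k j) * uterm n (k - 1) (j + 2)))
   = (\<Sum>(k, j)\<in>ubox n. sc (ucoef n k j * gam1 n k j + ucoef n k (j - 1) * gam2 n k (j - 1)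
      + ucoef n (k - 1) j * gam3 n (k - 1) j + ucoef n (k + 1) (j - 1) * gam4 n (k + 1) (j - 1)
      - ucoef n (k + 1) j * gam5 n (k + 1) j - ucoef n (k + 1) (j - 2) * gam6 n (k + 1) (j - 2))
          * uterm n k j)"
proof -
  let ?A = "ucoef n" and ?W = "uterm n"
  have "(\<Sum>(k, j)\<in>ubox n. sc (?A k j) *
     (sc (gam1 n k j) * ?W k j + sc (gam2 n k j) * ?W k (j + 1) + sc (gam3 n k j) * ?W (k + 1) j
      + sc (gam4 n k j) * ?W (k - 1) (j + 1) - sc (gam5 n k j) * ?W (k - 1) j
          - sc (gam6 n k j) * ?W (k - 1) (j + 2)))
    = (\<Sum>(k, j)\<in>ubox n. sc (?A k j * gam1 n k j) * ?W (k + 0) (j + 0))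
     + (\<Sum>(k, j)\<in>ubox n. sc (?A k j * gam2 n k j) * ?W (k + 0) (j + 1))
     + (\<Sum>(k, j)\<in>ubox n. sc (?A k j * gam3 n k j) * ?W (k + 1) (j + 0))
     + (\<Sum>(k, j)\<in>ubox n. sc (?A k j * gam4 n k j) * ?W (k + (-1)) (j + 1))
     - (\<Sum>(k, j)\<in>ubox n. sc (?A k j * gam5 n k j) * ?W (k + (-1)) (j + 0))
     - (\<Sum>(k, j)\<in>ubox n. sc (?A k j * gam6 n k j) * ?W (k + (-1)) (j + 2))"
    by (simp add: case_prod_unfold sum.distrib sum_subtractf algebra_simps sc_mult_assoc)
  also have "\<dots> = (\<Sum>(k, j)\<in>ubox n. sc (?A (k - 0) (j - 0) * gam1 n (k - 0) (j - 0)) * ?W k j)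
     + (\<Sum>(k, j)\<in>ubox n. sc (?A (k - 0) (j - 1) * gam2 n (k - 0) (j - 1)) * ?W k j)
     + (\<Sum>(k, j)\<in>ubox n. sc (?A (k - 1) (j - 0) * gam3 n (k - 1) (j - 0)) * ?W k j)
     + (\<Sum>(k, j)\<in>ubox n. sc (?A (k - (-1)) (j - 1) * gam4 n (k - (-1)) (j - 1)) * ?W k j)
     - (\<Sum>(k, j)\<in>ubox n. sc (?A (k - (-1)) (j - 0) * gam5 n (k - (-1)) (j - 0)) * ?W k j)
     - (\<Sum>(k, j)\<in>ubox n. sc (?A (k - (-1)) (j - 2) * gam6 n (k - (-1)) (j - 2)) * ?W k j)"
    by (intro arg_cong2[where f="(+)"] arg_cong2[where f="(-)"] sum_ubox_shift) (auto dest: ucoef_support)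
  also have "\<dots> = (\<Sum>(k, j)\<in>ubox n. sc (?A k j * gam1 n k j + ?A k (j - 1) * gam2 n k (j - 1)
      + ?A (k - 1) j * gam3 n (k - 1) j + ?A (k + 1) (j - 1) * gam4 n (k + 1) (j - 1)
      - ?A (k + 1) j * gam5 n (k + 1) j - ?A (k + 1) (j - 2) * gam6 n (k + 1) (j - 2)) * ?W k j)"
    by (simp add: case_prod_unfold sum.distrib sum_subtractf algebra_simps sc_add[symmetric] sc_diff[symmetric])
  finally show ?thesis .
qed

lemma C1_usum:
  assumes "hfun q n \<kappa> c = 0"
  shows "veq (C1 q * usum n) (sc (c_eps q \<kappa> n) * usum n)"
proof -
  have "veq (C1 q * usum n) (\<Sum>(k, j)\<in>ubox n. sc (c_eps q \<kappa> n * ucoef n k j) * uterm n k j)"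
    using C1_usum_expand[of n] unfolding C1_usum_collect ucoef_recurrence[OF assms] .
  also have "\<dots> = sc (c_eps q \<kappa> n) * usum n"
    unfolding usum_def by (simp add: sum_distrib_left case_prod_unfold sc_mult_assoc)
  finally show ?thesis .
qed

lemma C1_u01: "hfun q n \<kappa> c = 0 \<Longrightarrow> veq (C1 q * u01 q \<alpha> n) (sc (c_eps q \<kappa> n) * u01 q \<alpha> n)"
proof -
  assume h: "hfun q n \<kappa> c = 0"
  have "veq (C1 q * u01 q \<alpha> n) (C1 q * usum n)" by (intro eqV_mult_left u01_eq_usum)
  also have "veq \<dots> (sc (c_eps q \<kappa> n) * usum n)" by (rule C1_usum[OF h])
  also have "veq \<dots> (sc (c_eps q \<kappa> n) * u01 q \<alpha> n)" by (rule eqV_mult_left[OF eqV_sym[OF u01_eq_usum]])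
  finally show ?thesis .
qed

end

section \<open>Critical points\<close>

lemma power_inj_not_root_of_unity:
  fixes q :: complex
  assumes q_nonzero: "q \<noteq> 0" and q_not_root_of_unity: "\<forall>m::nat. m > 0 \<longrightarrow> q ^ m \<noteq> 1" and e: "q ^ a = q ^ b"
  shows "a = b"
proof (rule ccontr)
  assume "a \<noteq> b"
  then consider "a < b" | "b < a" by linarith
  then show False
  proof cases
    case 1
    then have "q ^ b = q ^ a * q ^ (b - a)" by (simp add: power_add[symmetric])
    then have "q ^ (b - a) = 1" using e q_nonzero by simp
    then show False using q_not_root_of_unity 1 by auto
  next
    case 2
    then have "q ^ a = q ^ b * q ^ (a - b)" by (simp add: power_add[symmetric])
    then have "q ^ (a - b) = 1" using e q_nonzero by simp
    then show False using q_not_root_of_unity 2 by auto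
  qed
qed

lemma power_int_double_nat: "x powi (2 * int a) = x ^ (2 * a)"
proof -
  have "2 * int a = int (2 * a)" by simp
  then show ?thesis by (simp only: power_int_of_nat)
qed

lemma power_int_odd_inj:
  fixes q :: complex
  assumes q_nonzero: "q \<noteq> 0" and q_not_root_of_unity: "\<forall>m::nat. m > 0 \<longrightarrow> q ^ m \<noteq> 1"
    and e: "q powi (2 * int a - 3) = q powi (2 * int b - 3)"
  shows "a = b"
proof -
  have "q powi (2 * int a - 3) * q ^ 3 = q ^ (2 * a)"
    using q_nonzero by (simp add: power_int_diff power_int_double_nat)
  moreover have "q powi (2 * int b - 3) * q ^ 3 = q ^ (2 * b)"
    using q_nonzero by (simp add: power_int_diff power_int_double_nat)
  ultimately have "q ^ (2 * a) = q ^ (2 * b)" using e by simp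
  then have "2 * a = 2 * b" by (rule power_inj_not_root_of_unity[OF q_nonzero q_not_root_of_unity])
  then show ?thesis by simp
qed

lemma hfun_eq:
  fixes q :: complex
  assumes "q \<noteq> 0"
  shows "hfun q n \<kappa> c = inverse (q powi (2 * int n - 3)) * \<kappa> + q powi (2 * int n - 3) * inverse \<kappa>
      - (q - inverse q)\<^sup>2 * c"
proof -
  have "q powi (3 - 2 * int n) = inverse (q powi (2 * int n - 3))"
    using power_int_minus[of q "2 * int n - 3"] by simp
  then show ?thesis by (simp add: hfun_def)
qed

lemma hfun_zero_pair:
  fixes q \<kappa> c :: complex
  assumes q_nonzero: "q \<noteq> 0" and \<kappa>_nonzero: "\<kappa> \<noteq> 0"
    and h1: "hfun q n1 \<kappa> c = 0" and h2: "hfun q n2 \<kappa> c = 0"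
  shows "q powi (2 * int n1 - 3) = q powi (2 * int n2 - 3)
    \<or> q powi (2 * int n1 - 3) * q powi (2 * int n2 - 3) = \<kappa>^2"
proof -
  define x1 where "x1 = q powi (2 * int n1 - 3)"
  define x2 where "x2 = q powi (2 * int n2 - 3)"
  have x1: "x1 \<noteq> 0" "x2 \<noteq> 0" using q_nonzero by (simp_all add: x1_def x2_def)
  have E: "(inverse x1 * \<kappa> + x1 * inverse \<kappa>) - (inverse x2 * \<kappa> + x2 * inverse \<kappa>) = 0"
    using h1 h2 hfun_eq[OF q_nonzero, of n1 \<kappa> c] hfun_eq[OF q_nonzero, of n2 \<kappa> c]
      unfolding x1_def x2_def by simp
  have "(x1 - x2) * (x1 * x2 - \<kappa>^2)
      = \<kappa> * x1 * x2 * ((inverse x1 * \<kappa> + x1 * inverse \<kappa>) - (inverse x2 * \<kappa> + x2 * inverse \<kappa>))"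
    using x1 \<kappa>_nonzero by (simp add: field_simps power2_eq_square)
  then have "(x1 - x2) * (x1 * x2 - \<kappa>^2) = 0" using E by simp
  then show ?thesis unfolding x1_def[symmetric] x2_def[symmetric] by auto
qed

lemma critset_finite:
  fixes q \<kappa> c :: complex
  assumes q_nonzero: "q \<noteq> 0" and q_not_root_of_unity: "\<forall>m::nat. m > 0 \<longrightarrow> q ^ m \<noteq> 1"
    and cr: "critical q \<kappa> c"
  shows "finite (critset q \<kappa> c)"
proof -
  have \<kappa>_nonzero: "\<kappa> \<noteq> 0" using cr by (simp add: critical_def)
  obtain n0 where n0: "n0 \<in> critset q \<kappa> c" using cr by (auto simp: critical_def)
  define S where "S = {n \<in> critset q \<kappa> c. n \<noteq> n0}"
  have S1: "a = b" if "a \<in> S" "b \<in> S" for a b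
  proof -
    have h: "hfun q a \<kappa> c = 0" "hfun q b \<kappa> c = 0" "hfun q n0 \<kappa> c = 0" "a \<noteq> n0" "b \<noteq> n0"
      using that n0 by (auto simp: S_def critset_def)
    have na: "q powi (2 * int a - 3) * q powi (2 * int n0 - 3) = \<kappa>^2"
      using hfun_zero_pair[OF q_nonzero \<kappa>_nonzero h(1) h(3)] power_int_odd_inj[OF q_nonzero q_not_root_of_unity]
        h(4) by blast
    have nb: "q powi (2 * int b - 3) * q powi (2 * int n0 - 3) = \<kappa>^2"
      using hfun_zero_pair[OF q_nonzero \<kappa>_nonzero h(2) h(3)] power_int_odd_inj[OF q_nonzero q_not_root_of_unity]
        h(5) by blast
    have "q powi (2 * int n0 - 3) \<noteq> 0" using q_nonzero by simp
    then have "q powi (2 * int a - 3) = q powi (2 * int b - 3)" using na nb by (metis mult_right_cancel)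
    then show ?thesis by (rule power_int_odd_inj[OF q_nonzero q_not_root_of_unity])
  qed
  have "finite S"
  proof (cases "S = {}")
    case False
    then obtain a where "a \<in> S" by blast
    then have "S = {a}" using S1 by blast
    then show ?thesis by simp
  qed simp
  moreover have "critset q \<kappa> c \<subseteq> insert n0 S" by (auto simp: S_def)
  ultimately show ?thesis by (meson finite_insert finite_subset)
qed

lemma nplus_nminus_in_critset:
  fixes q \<kappa> c :: complex
  assumes "q \<noteq> 0" and "\<forall>m::nat. m > 0 \<longrightarrow> q ^ m \<noteq> 1" and "critical q \<kappa> c"
  shows "nplus q \<kappa> c \<in> critset q \<kappa> c" and "nminus q \<kappa> c \<in> critset q \<kappa> c"
proof -
  have "finite (critset q \<kappa> c)" and "critset q \<kappa> c \<noteq> {}"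
    using critset_finite[OF assms] assms(3) by (simp_all add: critical_def)
  then show "nplus q \<kappa> c \<in> critset q \<kappa> c" and "nminus q \<kappa> c \<in> critset q \<kappa> c"
    unfolding nplus_def nminus_def by (simp_all add: Max_in Min_in)
qed

lemma q_inverse_diff_nonzero_if_not_root_of_unity:
  fixes q :: complex
  assumes "q \<noteq> 0" and "\<forall>m::nat. m > 0 \<longrightarrow> q ^ m \<noteq> 1"
  shows "q - inverse q \<noteq> 0"
proof
  assume "q - inverse q = 0"
  then have "q ^ 2 = 1" using assms(1) by (simp add: power2_eq_square field_simps)
  then show False using assms(2) by auto
qed

theorem corollary5p3:
  fixes q \<alpha> \<kappa> c :: complex
  assumes "q \<noteq> 0" and "\<forall>m::nat. m > 0 \<longrightarrow> q ^ m \<noteq> 1"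
    and "\<alpha> \<noteq> 0"
    and "critical q \<kappa> c"
  shows "\<forall>m \<in> {nplus q \<kappa> c, nminus q \<kappa> c}.
           eqV q \<alpha> \<kappa> c (Kel * u01 q \<alpha> m) (sc (kappa_eps q \<kappa> m) * u01 q \<alpha> m)
         \<and> eqV q \<alpha> \<kappa> c (C1 q * u01 q \<alpha> m) (sc (c_eps q \<kappa> m) * u01 q \<alpha> m)"
proof -
  have "\<kappa> \<noteq> 0"
    using assms(4) by (simp add: critical_def)
  then interpret generic_quotient_module q \<alpha> \<kappa> c
    using assms q_inverse_diff_nonzero_if_not_root_of_unity by unfold_locales auto
  have "hfun q m \<kappa> c = 0" if "m \<in> {nplus q \<kappa> c, nminus q \<kappa> c}" for m
    using that nplus_nminus_in_critset[OF assms(1,2,4)] by (auto simp: critset_def)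
  then show ?thesis
    using Kel_u01 C1_u01 by blast
qed

end
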